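(* Let $\alpha\in\mathbb{R}$, $\vartheta\in(0,\pi)$, and let $H^+$ be the even part of the bent chain Hamiltonian $H_\vartheta$ described in the context. - If $\alpha\ge0$, then $H^+$ has no negative eigenvalues. - If $\alpha<0$, then $H^+$ has at least one negative eigenvalue. This eigenvalue lies below the lowest spectral band of $H_\vartheta$ and above $-\kappa_0^2$, where $\kappa_0>0$ is the unique positive solution of $\kappa\tanh\kappa\pi=-\alpha/2$.
   Context: Bent chain. Start from an infinite chain of rings indexed by $j\in\mathbb{Z}$, with consecutive rings touching at single points (the vertices, each of degree 4). - For $j\neq0$, each ring consists of two edges (upper and lower arc), each of length $\pi$. - The ring $j=0$ consists of an upper arc of length $\pi+\vartheta$ and a lower arc of length $\pi-\vartheta$, with $\vartheta\in(0,\pi)$. Call this graph $\Gamma_\vartheta$. The operator $H_\vartheta$ on $L^2(\Gamma_\vartheta)$ acts as $-\psi''$ on each edge. Its domain consists of the functions in $W^{2,2}_{\mathrm{loc}}$ with $H_\vartheta\psi\in L^2$ which satisfy at every vertex the $\delta$-coupling with parameter $\alpha$: the function is continuous at $v$ with value $\psi(v)$, and the sum of the four outgoing derivatives equals $\alpha\psi(v)$. The graph has a mirror symmetry: the reflection through the axis passing through the midpoints of the two arcs of ring $0$. This reflection maps ring $j$ to ring $-j$. $H_\vartheta$ commutes with it, and $H^+$ (resp. $H^-$) denotes the part of $H_\vartheta$ in the subspace of even (resp. odd) functions. Equivalently, $H^+$ (resp. $H^-$) is unitarily equivalent to the Laplacian on the half-graph consisting of the rings $j\ge1$ and the halves of the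 two arcs of ring $0$ adjacent to ring $1$, with the same $\delta$-couplings and with Neumann (resp. Dirichlet) conditions at the two arc midpoints. The essential spectrum of $H_\vartheta$ consists of the same spectral bands as for the straight chain (the case $\vartheta=0$). *)

theory Defs
  imports "HOL-Analysis.Analysis"
begin

text \<open>Edges of the ring chain are indexed by (j, b) :: int \<times> bool, where j is the
ring and b = True is the upper arc, b = False the lower arc. Edge (j,b) is
parametrised by x \<in> [0, l(j,b)], running from the vertex v_j (between rings j-1
and j) at x = 0 to the vertex v_(j+1) (between rings j and j+1) at x = l(j,b).\<close>

type_synonym edge = "int \<times> bool"
type_synonym gfun = "edge \<Rightarrow> real \<Rightarrow> real"

definition chain_len :: "real \<Rightarrow> edge \<Rightarrow> real" where
  "chain_len \<theta> e = (if fst e = 0 then (if snd e then pi + \<theta> else pi - \<theta>) else pi)"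

definition L2_graph :: "(edge \<Rightarrow> real) \<Rightarrow> gfun \<Rightarrow> bool" where
  "L2_graph l f \<longleftrightarrow>
     (\<forall>e. f e measurable_on {0..l e} \<and> (\<lambda>x. (f e x)^2) integrable_on {0..l e}) \<and>
     (\<lambda>e. integral {0..l e} (\<lambda>x. (f e x)^2)) summable_on UNIV"

definition ae_eq_graph :: "(edge \<Rightarrow> real) \<Rightarrow> gfun \<Rightarrow> gfun \<Rightarrow> bool" where
  "ae_eq_graph l f g \<longleftrightarrow> (\<forall>e. negligible {x \<in> {0..l e}. f e x \<noteq> g e x})"

definition edge_W22 :: "real \<Rightarrow> (real \<Rightarrow> real) \<Rightarrow> (real \<Rightarrow> real) \<Rightarrow> (real \<Rightarrow> real) \<Rightarrow> bool" where
  "edge_W22 l u u' u'' \<longleftrightarrow>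
     u'' absolutely_integrable_on {0..l} \<and> (\<lambda>x. (u'' x)^2) integrable_on {0..l} \<and>
     (\<forall>x\<in>{0..l}. u' x = u' 0 + integral {0..x} u'' \<and> u x = u 0 + integral {0..x} u')"

text \<open>delta-coupling with parameter alpha at every vertex v_j of the chain
 (ends of edges (j-1,b), starts of edges (j,b)); derivatives taken outward.\<close>
definition delta_cond :: "(edge \<Rightarrow> real) \<Rightarrow> real \<Rightarrow> gfun \<Rightarrow> gfun \<Rightarrow> bool" where
  "delta_cond l \<alpha> u u' \<longleftrightarrow> (\<forall>j::int.
     u (j - 1, True) (l (j - 1, True)) = u (j, True) 0 \<and>
     u (j - 1, False) (l (j - 1, False)) = u (j, True) 0 \<and>
     u (j, False) 0 = u (j, True) 0 \<and>
     u' (j, True) 0 + u' (j, False) 0 - u' (j - 1, True) (l (j - 1, True))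
        - u' (j - 1, False) (l (j - 1, False)) = \<alpha> * u (j, True) 0)"

text \<open>Graph of the operator H: H_rel l alpha psi phi means psi \<in> dom H and
 H psi = phi (as elements of L^2, i.e. almost everywhere).\<close>
definition H_rel :: "(edge \<Rightarrow> real) \<Rightarrow> real \<Rightarrow> gfun \<Rightarrow> gfun \<Rightarrow> bool" where
  "H_rel l \<alpha> \<psi> \<phi> \<longleftrightarrow> L2_graph l \<psi> \<and> L2_graph l \<phi> \<and>
     (\<exists>\<psi>' \<psi>''. (\<forall>e. edge_W22 (l e) (\<psi> e) (\<psi>' e) (\<psi>'' e)) \<and>
        ae_eq_graph l \<phi> (\<lambda>e x. - \<psi>'' e x) \<and> delta_cond l \<alpha> \<psi> \<psi>')"

text \<open>Resolvent set / (real part of the) spectrum: H - mu bijective from dom H onto L^2.\<close>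
definition chain_resolvent :: "(edge \<Rightarrow> real) \<Rightarrow> real \<Rightarrow> real set" where
  "chain_resolvent l \<alpha> = {\<mu>.
     (\<forall>f. L2_graph l f \<longrightarrow> (\<exists>\<psi>. H_rel l \<alpha> \<psi> (\<lambda>e x. f e x + \<mu> * \<psi> e x))) \<and>
     (\<forall>\<psi>. H_rel l \<alpha> \<psi> (\<lambda>e x. \<mu> * \<psi> e x) \<longrightarrow> ae_eq_graph l \<psi> (\<lambda>e x. 0))}"

definition chain_spectrum :: "(edge \<Rightarrow> real) \<Rightarrow> real \<Rightarrow> real set" where
  "chain_spectrum l \<alpha> = - chain_resolvent l \<alpha>"

definition even_fn :: "(edge \<Rightarrow> real) \<Rightarrow> gfun \<Rightarrow> bool" where
  "even_fn l \<psi> \<longleftrightarrow> (\<forall>j b x. x \<in> {0..l (j, b)} \<longrightarrow> \<psi> (- j, b) (l (j, b) - x) = \<psi> (j, b) x)"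

definition even_eigenvalue :: "real \<Rightarrow> real \<Rightarrow> real \<Rightarrow> bool" where
  "even_eigenvalue \<theta> \<alpha> E \<longleftrightarrow> (\<exists>\<psi>.
     H_rel (chain_len \<theta>) \<alpha> \<psi> (\<lambda>e x. E * \<psi> e x) \<and> even_fn (chain_len \<theta>) \<psi> \<and>
     \<not> ae_eq_graph (chain_len \<theta>) \<psi> (\<lambda>e x. 0))"

end

theory Submission
  imports Defs
begin

text \<open>For \<open>E = -k\<^sup>2 < 0\<close> an eigenfunction is on each edge the combination of \<open>sinh (k x)\<close> and
\<open>sinh (k (\<ell> - x))\<close> fixed by its vertex values \<open>u\<^sub>j\<close>, and away from ring \<open>0\<close> the \<open>\<delta>\<close>-condition is the
recurrence \<open>u\<^sub>j\<^sub>+\<^sub>1 + u\<^sub>j\<^sub>-\<^sub>1 = 2 D(k) u\<^sub>j\<close> with \<open>D(k) = cosh k\<pi> + \<alpha> sinh k\<pi> / 4k\<close>. A solution of such a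
recurrence that tends to \<open>0\<close> and has all coefficients \<open>> 1\<close> is zero by the maximum principle. For \<open>\<alpha> \<ge> 0\<close> the
even symmetry \<open>u\<^sub>1\<^sub>-\<^sub>j = u\<^sub>j\<close> turns ring \<open>0\<close> into one more vertex of this kind, so \<open>H\<^sup>+\<close> has no negative
eigenvalue. For the straight chain the same argument, together with variation of constants on the edges
and an \<open>\<ell>\<^sup>2\<close> solution of the inhomogeneous recurrence, puts \<open>-k\<^sup>2\<close> into the resolvent set whenever
\<open>D(k) > 1\<close>, that is above the band edge \<open>k\<^sub>b\<close>. For \<open>\<alpha> < 0\<close> the even ansatz \<open>u\<^sub>j = q\<^sup>j\<^sup>-\<^sup>1\<close> (\<open>j \<ge> 1\<close>)
with \<open>q + 1/q = 2 D(k)\<close> satisfies every vertex condition except the one at ring \<open>0\<close>, a single scalar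
equation in \<open>k\<close> whose left-hand side changes sign between \<open>k\<^sub>b\<close> and \<open>\<kappa>\<^sub>0\<close>.\<close>

lemma sinh_gt_self: "y > 0 \<Longrightarrow> sinh y > (y::real)"
proof -
  assume y: "y > 0"
  have "(\<lambda>t. sinh t - t) 0 < (\<lambda>t. sinh t - t) y"
  proof (rule DERIV_pos_imp_increasing_open[OF y])
    fix x :: real assume x: "0 < x" "x < y"
    have "((\<lambda>t. sinh t - t) has_real_derivative cosh x - 1) (at x)"
      by (auto intro!: derivative_eq_intros)
    moreover have "cosh x - 1 > 0" using cosh_real_ge_1[of x] cosh_real_one_iff[of x] x by linarith
    ultimately show "\<exists>d. ((\<lambda>t. sinh t - t) has_real_derivative d) (at x) \<and> 0 < d" by blast
  qed (intro continuous_intros)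
  thus ?thesis by simp
qed

lemma cosh_gt_1: "y \<noteq> 0 \<Longrightarrow> cosh y > (1::real)"
  using cosh_real_ge_1[of y] cosh_real_one_iff[of y] by linarith

lemma abs_sinh_le_cosh: "\<bar>sinh x\<bar> \<le> cosh (x::real)"
proof -
  have "(sinh x)^2 \<le> (cosh x)^2" using cosh_square_eq[of x] by simp
  thus ?thesis by (metis abs_le_square_iff abs_of_nonneg cosh_real_nonneg)
qed

lemma cosh_minus_1_div_sinh: "y > 0 \<Longrightarrow> (cosh y - 1) / sinh y = tanh (y/2)" for y :: real
proof -
  assume "y > 0"
  define z where "z = y/2"
  have y: "y = 2*z" by (simp add: z_def)
  have "cosh (2*z) - 1 = 2 * (sinh z)^2" using cosh_double[of z] cosh_square_eq[of z] by simp
  moreover have "sinh (2*z) = 2 * sinh z * cosh z" by (rule sinh_double)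
  moreover have "sinh z \<noteq> 0" using \<open>y > 0\<close> by (simp add: z_def)
  ultimately show ?thesis unfolding y tanh_def by (simp add: power2_eq_square field_simps z_def)
qed

lemma tanh_add_plus_tanh_diff_less:
  fixes a d :: real
  assumes d: "0 < d" and da: "d < a"
  shows "tanh (a+d) + tanh (a-d) < 2 * tanh a"
proof -
  define A where "A = tanh a"
  define t where "t = tanh d"
  have A: "0 < A" "A < 1" using d da tanh_real_lt_1[of a] by (simp_all add: A_def)
  have t: "0 < t" "t < 1" using d tanh_real_lt_1[of d] by (simp_all add: t_def)
  have At: "A*t < 1" using mult_strict_mono[of A 1 t 1] A t by simp
  have p: "0 < 1 + A*t" "0 < 1 - A*t" using A t At by (simp_all add: add_pos_pos)
  have "tanh (a+d) = (A + t) / (1 + A*t)" unfolding A_def t_def by (rule tanh_add) simp_all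
  moreover have "tanh (a-d) = (A - t) / (1 - A*t)"
    using tanh_add[of a "-d"] unfolding A_def t_def by simp
  ultimately have "tanh (a+d) + tanh (a-d) = (A + t) / (1 + A*t) + (A - t) / (1 - A*t)" by simp
  also have "\<dots> = 2*A*(1 - t^2) / (1 - (A*t)^2)"
    using p by (simp add: field_simps power2_eq_square)
  also have "\<dots> < 2*A"
  proof -
    have "(A*t)*(A*t) < t*t" using mult_strict_mono[of "A*t" t "A*t" t] A t At
      by (simp add: mult_strict_right_mono)
    moreover have "(A*t)*(A*t) < 1" using mult_strict_mono[of "A*t" 1 "A*t" 1] At A t by simp
    moreover have "0 < 1 - t^2" using mult_strict_mono[of t 1 t 1] t by (simp add: power2_eq_square)
    ultimately show ?thesis using A by (simp add: field_simps power2_eq_square)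
  qed
  finally show ?thesis by (simp add: A_def)
qed

lemma square_sum_le: "(a + b)^2 \<le> 2*a^2 + 2*(b::real)^2"
proof -
  have "0 \<le> (a - b)^2" by simp
  thus ?thesis by (simp add: power2_eq_square algebra_simps)
qed

lemma square_sum3_le: "(a + b + c)^2 \<le> 3 * (a^2 + b^2 + (c::real)^2)"
proof -
  have "0 \<le> (a-b)^2 + (b-c)^2 + (a-c)^2" by simp
  thus ?thesis by (simp add: power2_eq_square algebra_simps)
qed

lemma square_sum4_le: "(a + b + c + d)^2 \<le> 4 * (a^2 + b^2 + c^2 + (d::real)^2)"
proof -
  have "0 \<le> (a-b)^2 + (a-c)^2 + (a-d)^2 + (b-c)^2 + (b-d)^2 + (c-d)^2" by simp
  thus ?thesis by (simp add: power2_eq_square algebra_simps)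
qed

lemma abs_le_imp_square_le: "\<bar>x\<bar> \<le> y \<Longrightarrow> x^2 \<le> (y::real)^2"
  by (metis abs_ge_zero abs_le_square_iff abs_of_nonneg order_trans)

lemma tendsto_zero_if_square_le:
  fixes a I :: "'a \<Rightarrow> real"
  assumes c: "c > 0" and le: "\<forall>\<^sub>F n in F. c * (a n)^2 \<le> I n" and I: "(I \<longlongrightarrow> 0) F"
  shows "(a \<longlongrightarrow> 0) F"
proof -
  have "((\<lambda>n. (a n)^2) \<longlongrightarrow> 0) F"
  proof (rule tendsto_sandwich[of "\<lambda>n. 0" _ _ "\<lambda>n. I n / c"])
    show "\<forall>\<^sub>F n in F. (a n)^2 \<le> I n / c"
      using le by eventually_elim (use c in \<open>simp add: field_simps mult.commute\<close>)
    show "((\<lambda>n. I n / c) \<longlongrightarrow> 0) F" using tendsto_divide[OF I tendsto_const, of c] c by simp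
  qed auto
  hence "((\<lambda>n. sqrt ((a n)^2)) \<longlongrightarrow> sqrt 0) F" by (rule tendsto_real_sqrt)
  thus ?thesis by (simp add: tendsto_rabs_zero_cancel)
qed

section \<open>Second order difference equations\<close>

lemma tendsto_zero_cofinite_if_summable_on:
  fixes f :: "'a \<Rightarrow> real"
  assumes f: "f summable_on UNIV" and nonneg: "\<And>x. f x \<ge> 0"
  shows "(f \<longlongrightarrow> 0) cofinite"
proof (rule tendstoI)
  fix \<epsilon> :: real assume \<epsilon>: "\<epsilon> > 0"
  define S where "S = {x. \<epsilon> \<le> f x}"
  have "card G \<le> nat \<lceil>infsum f UNIV / \<epsilon>\<rceil>" if "G \<subseteq> S" "finite G" for G
  proof -
    have "real (card G) * \<epsilon> = (\<Sum>x\<in>G. \<epsilon>)" by simp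
    also have "\<dots> \<le> sum f G" using that by (intro sum_mono) (auto simp: S_def)
    also have "\<dots> \<le> infsum f UNIV" by (rule finite_sum_le_infsum[OF f]) (use that nonneg in auto)
    finally have "real (card G) \<le> infsum f UNIV / \<epsilon>" using \<epsilon> by (simp add: field_simps)
    thus ?thesis by linarith
  qed
  hence "finite S" using finite_if_finite_subsets_card_bdd by blast
  thus "\<forall>\<^sub>F x in cofinite. dist (f x) 0 < \<epsilon>"
    unfolding eventually_cofinite S_def using nonneg by (simp add: not_less)
qed

lemma abs_max_if_tendsto_zero_cofinite:
  fixes u :: "'a \<Rightarrow> real"
  assumes lim: "(u \<longlongrightarrow> 0) cofinite" and nz: "u j \<noteq> 0"
  obtains m where "u m \<noteq> 0" "\<And>i. \<bar>u i\<bar> \<le> \<bar>u m\<bar>"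
proof -
  define S where "S = {i. \<bar>u j\<bar> \<le> \<bar>u i\<bar>}"
  have "\<forall>\<^sub>F i in cofinite. \<bar>u i\<bar> < \<bar>u j\<bar>"
    using tendstoD[OF lim, of "\<bar>u j\<bar>"] nz by simp
  hence fin: "finite S" by (simp add: eventually_cofinite S_def not_less)
  have "j \<in> S" by (simp add: S_def)
  hence "Max ((\<lambda>i. \<bar>u i\<bar>) ` S) \<in> (\<lambda>i. \<bar>u i\<bar>) ` S" using fin by (intro Max_in) auto
  then obtain m where m: "m \<in> S" "\<bar>u m\<bar> = Max ((\<lambda>i. \<bar>u i\<bar>) ` S)" by auto
  show ?thesis
  proof (rule that)
    show "u m \<noteq> 0" using m(1) nz by (auto simp: S_def)
    show "\<bar>u i\<bar> \<le> \<bar>u m\<bar>" for i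
    proof (cases "i \<in> S")
      case True thus ?thesis unfolding m(2) using fin by simp
    next
      case False thus ?thesis using m(1) by (auto simp: S_def)
    qed
  qed
qed

text \<open>A maximum principle: at a maximum of \<open>\<bar>u\<bar>\<close> the recurrence with a coefficient
\<open>D > 1\<close> is impossible unless \<open>u\<close> vanishes there.\<close>

lemma recurrence_solution_eq_0:
  fixes u :: "int \<Rightarrow> real"
  assumes rec: "\<And>j. \<exists>D>1. u (j+1) + u (j-1) = 2*D*u j" and lim: "(u \<longlongrightarrow> 0) cofinite"
  shows "u j = 0"
proof (rule ccontr)
  assume "u j \<noteq> 0"
  then obtain m where nz: "u m \<noteq> 0" and max: "\<And>i. \<bar>u i\<bar> \<le> \<bar>u m\<bar>"
    using abs_max_if_tendsto_zero_cofinite[OF lim] by blast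
  obtain D where D: "D > 1" "u (m+1) + u (m-1) = 2*D*u m" using rec by blast
  have "2*D*\<bar>u m\<bar> = \<bar>u (m+1) + u (m-1)\<bar>" using D by (simp add: abs_mult)
  also have "\<dots> \<le> 2*\<bar>u m\<bar>" using max[of "m+1"] max[of "m-1"] by linarith
  finally show False using D nz by simp
qed


lemma suminf_weighted_square_le:
  fixes a x :: "nat \<Rightarrow> real"
  assumes sa: "summable a" and a0: "\<And>n. 0 \<le> a n" and xb: "\<And>n. \<bar>x n\<bar> \<le> M"
  shows "(\<Sum>n. a n * x n)^2 \<le> (\<Sum>n. a n) * (\<Sum>n. a n * (x n)^2)"
proof -
  have s1: "summable (\<lambda>n. a n * x n)"
  proof (rule summable_comparison_test[of _ "\<lambda>n. M * a n"])
    show "\<exists>N. \<forall>n\<ge>N. norm (a n * x n) \<le> M * a n"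
    proof (intro exI allI impI)
      fix n show "norm (a n * x n) \<le> M * a n"
        using xb[of n] a0[of n] by (simp add: abs_mult) (metis mult.commute mult_left_mono)
    qed
  qed (auto intro!: summable_mult sa)
  have s2: "summable (\<lambda>n. a n * (x n)^2)"
  proof (rule summable_comparison_test[of _ "\<lambda>n. M^2 * a n"])
    show "\<exists>N. \<forall>n\<ge>N. norm (a n * (x n)\<^sup>2) \<le> M\<^sup>2 * a n"
    proof (intro exI allI impI)
      fix n
      have "(x n)^2 \<le> M^2" using xb[of n] by (metis abs_le_square_iff abs_of_nonneg abs_ge_zero order_trans)
      thus "norm (a n * (x n)\<^sup>2) \<le> M\<^sup>2 * a n" using a0[of n]
        by (simp add: abs_mult mult.commute mult_left_mono)
    qed
  qed (auto intro!: summable_mult sa)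
  define A where "A = (\<Sum>n. a n)"
  define S where "S = (\<Sum>n. a n * x n)"
  define T where "T = (\<Sum>n. a n * (x n)^2)"
  have eq: "(\<lambda>n. a n * (A * x n - S)^2) = (\<lambda>n. A^2 * (a n * (x n)^2) - 2*A*S * (a n * x n) + S^2 * a n)"
    by (auto simp: power2_eq_square algebra_simps)
  have sm: "(\<lambda>n. a n * (A * x n - S)^2) sums (A^2 * T - 2*A*S*S + S^2*A)"
    unfolding eq
    by (intro sums_add sums_diff sums_mult) (auto simp: A_def S_def T_def intro!: summable_sums sa s1 s2)
  have "0 \<le> A^2 * T - 2*A*S*S + S^2*A"
    by (rule sums_le[OF _ sums_zero sm]) (auto simp: a0)
  hence key: "0 \<le> A * (A*T - S^2)" by (simp add: power2_eq_square algebra_simps)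
  have A0: "A \<ge> 0" unfolding A_def by (intro suminf_nonneg sa a0)
  show ?thesis
  proof (cases "A = 0")
    case True
    hence "\<forall>n. a n = 0" using suminf_eq_zero_iff[OF sa] a0 A_def by auto
    thus ?thesis by simp
  next
    case False
    with A0 have "A > 0" by simp
    with key have "A*T - S^2 \<ge> 0" by (simp add: zero_le_mult_iff)
    thus ?thesis by (simp add: A_def S_def T_def)
  qed
qed

lemma square_le_infsum:
  fixes h :: "'a \<Rightarrow> real"
  assumes "(\<lambda>j. (h j)^2) summable_on UNIV"
  shows "(h j)^2 \<le> infsum (\<lambda>j. (h j)^2) UNIV"
proof -
  have "sum (\<lambda>j. (h j)^2) {j} \<le> infsum (\<lambda>j. (h j)^2) UNIV"
    by (rule finite_sum_le_infsum[OF assms]) auto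
  thus ?thesis by simp
qed

definition geometric_tail :: "real \<Rightarrow> (int \<Rightarrow> real) \<Rightarrow> int \<Rightarrow> real" where
  "geometric_tail q h j = (\<Sum>n. q^n * h (j + int n))"

lemma summable_geometric_tail:
  fixes h :: "int \<Rightarrow> real"
  assumes q: "0 < q" "q < 1" and h: "\<And>j. \<bar>h j\<bar> \<le> M"
  shows "summable (\<lambda>n. q^n * h (j + int n))"
  by (rule summable_comparison_test[of _ "\<lambda>n. M * q^n"])
     (use q h in \<open>auto intro!: summable_mult summable_geometric simp: abs_mult mult.commute mult_right_mono\<close>)

lemma geometric_tail_recurrence:
  fixes h :: "int \<Rightarrow> real"
  assumes q: "0 < q" "q < 1" and h: "\<And>j. \<bar>h j\<bar> \<le> M"
  shows "geometric_tail q h j = h j + q * geometric_tail q h (j+1)"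
proof -
  have ss: "summable (\<lambda>n. q^n * h (i + int n))" for i by (rule summable_geometric_tail[OF q h])
  have "(\<Sum>n. q^(Suc n) * h (j + int (Suc n))) = geometric_tail q h j - h j"
    using suminf_split_head[OF ss[of j]] by (simp add: geometric_tail_def)
  moreover have "(\<lambda>n. q^(Suc n) * h (j + int (Suc n))) = (\<lambda>n. q * (q^n * h ((j+1) + int n)))"
    by (auto simp: algebra_simps)
  ultimately show ?thesis using suminf_mult[OF ss[of "j+1"], of q] by (simp add: geometric_tail_def)
qed

text \<open>The weighted Cauchy-Schwarz inequality gives \<open>(\<Sum>\<^sub>n q\<^sup>n h\<^sub>j\<^sub>+\<^sub>n)\<^sup>2 \<le> (\<Sum>\<^sub>n q\<^sup>n) \<Sum>\<^sub>n q\<^sup>n h\<^sub>j\<^sub>+\<^sub>n\<^sup>2\<close>;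
summing over \<open>j\<close> bounds the \<open>\<ell>\<^sup>2\<close> norm by \<open>(\<Sum>\<^sub>n q\<^sup>n)\<^sup>2 \<Sum>\<^sub>j h\<^sub>j\<^sup>2\<close>.\<close>

lemma geometric_tail_square_summable:
  fixes h :: "int \<Rightarrow> real"
  assumes q: "0 < q" "q < 1" and hs: "(\<lambda>j. (h j)^2) summable_on UNIV"
  shows "(\<lambda>j. (geometric_tail q h j)^2) summable_on UNIV"
proof -
  define B where "B = infsum (\<lambda>j. (h j)^2) UNIV"
  have hB: "\<bar>h j\<bar> \<le> sqrt B" for j
    using square_le_infsum[OF hs, of j] unfolding B_def by (metis real_sqrt_abs real_sqrt_le_mono)
  have sg: "summable (\<lambda>n. q^n)" using q by (intro summable_geometric) auto
  define A where "A = (\<Sum>n. q^n)"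
  have A0: "A \<ge> 0" unfolding A_def using q by (intro suminf_nonneg sg) auto
  have cs: "(geometric_tail q h j)^2 \<le> A * (\<Sum>n. q^n * (h (j + int n))^2)" for j
    unfolding geometric_tail_def A_def by (rule suminf_weighted_square_le[OF sg _ hB]) (use q in auto)
  have ss2: "summable (\<lambda>n. q^n * (h (j + int n))^2)" for j
    by (rule summable_comparison_test[of _ "\<lambda>n. B * q^n"])
       (use q square_le_infsum[OF hs] in \<open>auto intro!: summable_mult2 sg simp: abs_mult mult.commute mult_right_mono B_def\<close>)
  have "sum (\<lambda>j. (geometric_tail q h j)^2) F \<le> A * (A * B)" if F: "finite F" for F
  proof -
    have "sum (\<lambda>j. (geometric_tail q h j)^2) F \<le> sum (\<lambda>j. A * (\<Sum>n. q^n * (h (j + int n))^2)) F"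
      by (intro sum_mono cs)
    also have "\<dots> = A * (\<Sum>n. \<Sum>j\<in>F. q^n * (h (j + int n))^2)"
      by (simp add: sum_distrib_left[symmetric] suminf_sum[OF ss2, symmetric])
    also have "\<dots> \<le> A * (\<Sum>n. q^n * B)"
    proof (intro mult_left_mono A0 suminf_le allI)
      fix n
      have "(\<Sum>j\<in>F. (h (j + int n))^2) = (\<Sum>i\<in>(\<lambda>j. j + int n) ` F. (h i)^2)"
        by (subst sum.reindex) (auto simp: inj_on_def)
      also have "\<dots> \<le> B" unfolding B_def
        by (rule finite_sum_le_infsum[OF hs]) (use F in auto)
      finally show "(\<Sum>j\<in>F. q^n * (h (j + int n))^2) \<le> q^n * B"
        using q by (simp add: sum_distrib_left[symmetric] mult_left_mono)
      show "summable (\<lambda>n. \<Sum>j\<in>F. q^n * (h (j + int n))^2)" by (intro summable_sum ss2)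
      show "summable (\<lambda>n. q^n * B)" by (intro summable_mult2 sg)
    qed
    also have "\<dots> = A * (A * B)" using suminf_mult2[OF sg, of B] by (simp add: A_def mult.commute)
    finally show ?thesis .
  qed
  thus ?thesis by (intro nonneg_bdd_above_summable_on) (auto intro!: bdd_aboveI[where M="A*(A*B)"])
qed

lemma l2_solve_forward_recurrence:
  fixes h :: "int \<Rightarrow> real" and q :: real
  assumes q: "0 < q" "q < 1" and hs: "(\<lambda>j. (h j)^2) summable_on UNIV"
  shows "\<exists>w. (\<forall>j. w j = h j + q * w (j+1)) \<and> (\<lambda>j. (w j)^2) summable_on UNIV"
proof (intro exI[of _ "geometric_tail q h"] conjI allI geometric_tail_square_summable[OF q hs])
  have "\<bar>h j\<bar> \<le> sqrt (infsum (\<lambda>j. (h j)^2) UNIV)" for j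
    using square_le_infsum[OF hs, of j] by (metis real_sqrt_abs real_sqrt_le_mono)
  thus "geometric_tail q h j = h j + q * geometric_tail q h (j+1)" for j
    by (rule geometric_tail_recurrence[OF q])
qed

lemma l2_solve_backward_recurrence:
  fixes h :: "int \<Rightarrow> real" and q :: real
  assumes q: "0 < q" "q < 1" and hs: "(\<lambda>j. (h j)^2) summable_on UNIV"
  shows "\<exists>w. (\<forall>j. w j = h j + q * w (j-1)) \<and> (\<lambda>j. (w j)^2) summable_on UNIV"
proof -
  have "(\<lambda>j. (h (- j))^2) summable_on UNIV"
    using summable_on_reindex_bij_betw[of uminus "UNIV::int set" UNIV "\<lambda>j. (h j)^2"] hs
    by (simp add: bij_betw_def inj_def surj_def)
  from l2_solve_forward_recurrence[OF q this] obtain w where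
    w: "\<forall>j. w j = h (- j) + q * w (j+1)" "(\<lambda>j. (w j)^2) summable_on UNIV" by blast
  have "(\<lambda>j. (w (- j))^2) summable_on UNIV"
    using summable_on_reindex_bij_betw[of uminus "UNIV::int set" UNIV "\<lambda>j. (w j)^2"] w(2)
    by (simp add: bij_betw_def inj_def surj_def)
  moreover have "\<forall>j. w (-j) = h j + q * w (- (j - 1))"
  proof
    fix j show "w (-j) = h j + q * w (- (j - 1))"
      using w(1)[rule_format, of "-j"] by (simp add: algebra_simps)
  qed
  ultimately show ?thesis by (intro exI[of _ "\<lambda>j. w (-j)"]) auto
qed

lemma characteristic_root:
  fixes D :: real
  assumes D: "D > 1"
  defines "q \<equiv> D - sqrt (D^2 - 1)"
  shows "0 < q" "q < 1" "q^2 + 1 = 2 * D * q"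
proof -
  have "sqrt (D^2 - 1) < sqrt (D^2)" by (rule real_sqrt_less_mono) simp
  thus "0 < q" using D by (simp add: q_def)
  have "(D-1)^2 < D^2 - 1" using D by (simp add: power2_eq_square algebra_simps)
  hence "sqrt ((D-1)^2) < sqrt (D^2 - 1)" by (rule real_sqrt_less_mono)
  thus "q < 1" using D by (simp add: q_def)
  have "(sqrt (D^2-1))^2 = D^2 - 1" using D by (simp add: abs_square_le_1)
  thus "q^2 + 1 = 2 * D * q" unfolding q_def by (simp add: power2_eq_square algebra_simps)
qed

text \<open>With \<open>q + 1/q = 2D\<close> the difference operator factors into \<open>w \<mapsto> w - q w(\<cdot>+1)\<close>
and \<open>u \<mapsto> u - q u(\<cdot>-1)\<close>, each inverted on \<open>\<ell>\<^sup>2\<close> by a geometric series.\<close>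

lemma l2_solve_difference_equation:
  fixes g :: "int \<Rightarrow> real" and D :: real
  assumes D: "D > 1" and gs: "(\<lambda>j. (g j)^2) summable_on UNIV"
  shows "\<exists>u. (\<forall>j. u (j+1) + u (j-1) - 2 * D * u j = g j) \<and> (\<lambda>j. (u j)^2) summable_on UNIV"
proof -
  define q where "q = D - sqrt (D^2 - 1)"
  note q = characteristic_root[OF D, folded q_def]
  have "(\<lambda>j. (- q * g j)^2) summable_on UNIV"
    using summable_on_cmult_right[OF gs, of "q^2"] by (simp add: power_mult_distrib)
  from l2_solve_forward_recurrence[OF q(1,2) this] obtain w where
    w: "\<forall>j. w j = - q * g j + q * w (j+1)" "(\<lambda>j. (w j)^2) summable_on UNIV" by blast
  from l2_solve_backward_recurrence[OF q(1,2) w(2)] obtain u where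
    u: "\<forall>j. u j = w j + q * u (j-1)" "(\<lambda>j. (u j)^2) summable_on UNIV" by blast
  have "u (j+1) + u (j-1) - 2 * D * u j = g j" for j
  proof -
    have "w j = u j - q * u (j-1)" "w (j+1) = u (j+1) - q * u j"
      using u(1)[rule_format, of j] u(1)[rule_format, of "j+1"] by simp_all
    hence "u j - q * u (j-1) = - q * g j + q * (u (j+1) - q * u j)" using w(1) by metis
    hence "q * (u (j+1) + u (j-1) - 2 * D * u j - g j) = (1 + q^2 - 2*D*q) * u j"
      by (simp add: algebra_simps power2_eq_square)
    hence "q * (u (j+1) + u (j-1) - 2 * D * u j - g j) = 0" using q(3) by simp
    thus ?thesis using q(1) by simp
  qed
  with u(2) show ?thesis by blast
qed

section \<open>The equation \<open>u'' = k\<^sup>2 u\<close> on an edge\<close>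

definition sinh_interp :: "real \<Rightarrow> real \<Rightarrow> real \<Rightarrow> real \<Rightarrow> real \<Rightarrow> real" where
  "sinh_interp k L a b x = (a * sinh (k*(L - x)) + b * sinh (k*x)) / sinh (k*L)"

text \<open>The outward derivative, at the endpoint with value \<open>a\<close>, of the solution on an edge of
length \<open>L\<close> with boundary values \<open>a\<close> and \<open>b\<close> (the Dirichlet-to-Neumann map of the edge).\<close>

definition sinh_flux :: "real \<Rightarrow> real \<Rightarrow> real \<Rightarrow> real \<Rightarrow> real" where
  "sinh_flux k L a b = k * (b - cosh (k*L) * a) / sinh (k*L)"

lemma has_integral_derivative_initial_segment:
  fixes F f :: "real \<Rightarrow> real"
  assumes x: "x \<in> {0..l}"
    and d: "\<And>t. t \<in> {0..l} \<Longrightarrow> (F has_real_derivative f t) (at t within {0..l})"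
  shows "(f has_integral (F x - F 0)) {0..x}"
proof (rule fundamental_theorem_of_calculus)
  show "0 \<le> x" using x by simp
  fix t assume t: "t \<in> {0..x}"
  hence "t \<in> {0..l}" using x by auto
  from d[OF this] have "(F has_vector_derivative f t) (at t within {0..l})"
    by (simp add: has_real_derivative_iff_has_vector_derivative)
  thus "(F has_vector_derivative f t) (at t within {0..x})"
    by (rule has_vector_derivative_within_subset) (use x in auto)
qed

lemma has_derivative_if_integral_representation:
  fixes f g :: "real \<Rightarrow> real"
  assumes g: "continuous_on {0..l} g" and f: "\<And>x. x \<in> {0..l} \<Longrightarrow> f x = c + integral {0..x} g"
    and x: "x \<in> {0..l}"
  shows "(f has_real_derivative g x) (at x within {0..l})"
proof -
  have "((\<lambda>y. integral {0..y} g) has_real_derivative g x) (at x within {0..l})"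
    unfolding has_real_derivative_iff_has_vector_derivative
    by (intro integral_has_vector_derivative g x)
  from DERIV_add[OF DERIV_const[of c] this]
  have "((\<lambda>y. c + integral {0..y} g) has_real_derivative g x) (at x within {0..l})" by simp
  thus ?thesis by (rule has_field_derivative_transform_within[where d=1]) (use x f in simp_all)
qed

lemma edge_W22_continuous:
  assumes "edge_W22 l u u' u''"
  shows "continuous_on {0..l} u'" "continuous_on {0..l} u"
proof -
  have ii: "u'' integrable_on {0..l}"
    and e1: "\<And>x. x \<in> {0..l} \<Longrightarrow> u' x = u' 0 + integral {0..x} u''"
    and e2: "\<And>x. x \<in> {0..l} \<Longrightarrow> u x = u 0 + integral {0..x} u'"
    using assms set_lebesgue_integral_eq_integral(1) unfolding edge_W22_def by blast+
  have "continuous_on {0..l} (\<lambda>x. u' 0 + integral {0..x} u'')"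
    by (intro continuous_intros indefinite_integral_continuous_1 ii)
  thus cu': "continuous_on {0..l} u'" by (rule continuous_on_eq) (erule e1[symmetric])
  have "continuous_on {0..l} (\<lambda>x. u 0 + integral {0..x} u')"
    by (intro continuous_intros indefinite_integral_continuous_1 integrable_continuous_real cu')
  thus "continuous_on {0..l} u" by (rule continuous_on_eq) (erule e2[symmetric])
qed

lemma edge_W22_has_derivative:
  assumes W: "edge_W22 l u u' u''" and x: "x \<in> {0..l}"
  shows "(u has_real_derivative u' x) (at x within {0..l})"
proof (rule has_derivative_if_integral_representation[OF edge_W22_continuous(1)[OF W] _ x])
  show "u y = u 0 + integral {0..y} u'" if "y \<in> {0..l}" for y
    using W that unfolding edge_W22_def by blast
qed

lemma edge_W22_has_second_derivative:
  assumes W: "edge_W22 l u u' u''" and v: "continuous_on {0..l} v"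
    and ae: "negligible {x \<in> {0..l}. v x \<noteq> u'' x}" and x: "x \<in> {0..l}"
  shows "(u' has_real_derivative v x) (at x within {0..l})"
proof (rule has_derivative_if_integral_representation[OF v _ x, where c="u' 0"])
  fix y assume y: "y \<in> {0..l}"
  have "u' y = u' 0 + integral {0..y} u''" using W y unfolding edge_W22_def by blast
  also have "integral {0..y} u'' = integral {0..y} v"
    by (rule integral_spike[OF ae]) (use y in auto)
  finally show "u' y = u' 0 + integral {0..y} v" .
qed

lemma edge_W22_if_derivatives:
  fixes \<psi> p qq :: "real \<Rightarrow> real"
  assumes d1: "\<And>x. x \<in> {0..l} \<Longrightarrow> (\<psi> has_real_derivative p x) (at x within {0..l})"
    and d2: "\<And>x. x \<in> {0..l} \<Longrightarrow> (p has_real_derivative qq x) (at x within {0..l})"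
    and c: "continuous_on {0..l} qq"
  shows "edge_W22 l \<psi> p qq"
  unfolding edge_W22_def
proof (intro conjI ballI)
  show "qq absolutely_integrable_on {0..l}" by (rule absolutely_integrable_continuous_real[OF c])
  show "(\<lambda>x. (qq x)\<^sup>2) integrable_on {0..l}"
    by (intro integrable_continuous_real continuous_intros c)
  fix x assume x: "x \<in> {0..l}"
  show "p x = p 0 + integral {0..x} qq"
    using has_integral_derivative_initial_segment[OF x d2] by (simp add: integral_unique)
  show "\<psi> x = \<psi> 0 + integral {0..x} p"
    using has_integral_derivative_initial_segment[OF x d1] by (simp add: integral_unique)
qed

lemma zero_initial_solution_eq_0:
  fixes w w' :: "real \<Rightarrow> real" and k :: real
  assumes dw: "\<And>x. x \<in> {0..l} \<Longrightarrow> (w has_real_derivative w' x) (at x within {0..l})"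
    and dw': "\<And>x. x \<in> {0..l} \<Longrightarrow> (w' has_real_derivative k^2 * w x) (at x within {0..l})"
    and w0: "w 0 = 0" "w' 0 = 0" and x: "x \<in> {0..l}"
  shows "w x = 0" "w' x = 0"
proof -
  text \<open>First \<open>(w' + k w) e\<^sup>-\<^sup>k\<^sup>x\<close> and then \<open>w e\<^sup>k\<^sup>x\<close> is constant.\<close>
  have l: "0 \<in> {0..l}" using x by simp
  have "\<exists>c. \<forall>y\<in>{0..l}. (w' y + k * w y) * exp (- k * y) = c"
    by (rule has_field_derivative_zero_constant)
       (auto intro!: derivative_eq_intros dw dw' simp: power2_eq_square algebra_simps)
  then obtain c where c: "\<And>y. y \<in> {0..l} \<Longrightarrow> (w' y + k * w y) * exp (- k * y) = c" by blast
  have first_order: "w' y + k * w y = 0" if "y \<in> {0..l}" for y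
    using c[OF that] c[OF l] w0 by simp
  have "\<exists>c. \<forall>y\<in>{0..l}. w y * exp (k * y) = c"
  proof (rule has_field_derivative_zero_constant)
    fix y assume y: "y \<in> {0..l}"
    have "((\<lambda>y. w y * exp (k * y)) has_real_derivative (w' y + k * w y) * exp (k * y)) (at y within {0..l})"
      by (auto intro!: derivative_eq_intros dw[OF y] simp: algebra_simps)
    thus "((\<lambda>y. w y * exp (k * y)) has_real_derivative 0) (at y within {0..l})"
      using first_order[OF y] by simp
  qed simp
  then obtain c' where "\<And>y. y \<in> {0..l} \<Longrightarrow> w y * exp (k * y) = c'" by blast
  from this[OF x] this[OF l] show "w x = 0" using w0 by simp
  thus "w' x = 0" using first_order[OF x] by simp
qed

lemma sinh_ode_solution:
  fixes u u' :: "real \<Rightarrow> real" and k :: real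
  assumes k: "k > 0"
    and du: "\<And>x. x \<in> {0..l} \<Longrightarrow> (u has_real_derivative u' x) (at x within {0..l})"
    and du': "\<And>x. x \<in> {0..l} \<Longrightarrow> (u' has_real_derivative k^2 * u x) (at x within {0..l})"
    and x: "x \<in> {0..l}"
  shows "u x = u 0 * cosh (k*x) + u' 0 / k * sinh (k*x)"
    "u' x = u 0 * k * sinh (k*x) + u' 0 * cosh (k*x)"
proof -
  define v where "v x = u 0 * cosh (k*x) + u' 0 / k * sinh (k*x)" for x
  define v' where "v' x = u 0 * k * sinh (k*x) + u' 0 * cosh (k*x)" for x
  have dv: "(v has_real_derivative v' x) (at x within {0..l})" for x
    unfolding v_def v'_def using k by (auto intro!: derivative_eq_intros)
  have dv': "(v' has_real_derivative k^2 * v x) (at x within {0..l})" for x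
    unfolding v_def v'_def using k
    by (auto intro!: derivative_eq_intros simp: power2_eq_square algebra_simps)
  define w where "w y = u y - v y" for y
  define w' where "w' y = u' y - v' y" for y
  have dw: "(w has_real_derivative w' y) (at y within {0..l})" if "y \<in> {0..l}" for y
    unfolding w_def[abs_def] w'_def by (intro DERIV_diff du[OF that] dv)
  have dw': "(w' has_real_derivative k^2 * w y) (at y within {0..l})" if "y \<in> {0..l}" for y
    using DERIV_diff[OF du'[OF that] dv'[of y]] unfolding w_def w'_def[abs_def] by (simp add: algebra_simps)
  have "w 0 = 0" "w' 0 = 0" by (simp_all add: w_def w'_def v_def v'_def)
  note w = zero_initial_solution_eq_0[OF dw dw' this x]
  show "u x = u 0 * cosh (k*x) + u' 0 / k * sinh (k*x)" using w(1) by (simp add: w_def v_def)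
  show "u' x = u 0 * k * sinh (k*x) + u' 0 * cosh (k*x)" using w(2) by (simp add: w'_def v'_def)
qed

lemma edge_eigenfunction_eq_sinh_interp:
  fixes u u' u'' :: "real \<Rightarrow> real"
  assumes l: "0 < l" and k: "0 < k"
    and W: "edge_W22 l u u' u''"
    and ae: "negligible {x \<in> {0..l}. k^2 * u x \<noteq> u'' x}"
  shows "\<And>x. x \<in> {0..l} \<Longrightarrow> u x = sinh_interp k l (u 0) (u l) x"
    "u' 0 = sinh_flux k l (u 0) (u l)"
    "- u' l = sinh_flux k l (u l) (u 0)"
proof -
  have du': "\<And>x. x \<in> {0..l} \<Longrightarrow> (u' has_real_derivative k^2 * u x) (at x within {0..l})"
    using edge_W22_has_second_derivative[OF W _ ae] edge_W22_continuous(2)[OF W]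
    by (simp add: continuous_on_mult_left)
  have du: "\<And>x. x \<in> {0..l} \<Longrightarrow> (u has_real_derivative u' x) (at x within {0..l})"
    using edge_W22_has_derivative[OF W] .
  have sol: "u x = u 0 * cosh (k*x) + u' 0 / k * sinh (k*x)"
    "u' x = u 0 * k * sinh (k*x) + u' 0 * cosh (k*x)" if "x \<in> {0..l}" for x
    using sinh_ode_solution[OF k du du' that] by blast+
  have S: "sinh (k*l) > 0" using k l by simp
  have lin: "l \<in> {0..l}" using l by simp
  define c where "c = u' 0 / k"
  have ul: "u l = u 0 * cosh (k*l) + c * sinh (k*l)" using sol(1)[OF lin] by (simp add: c_def)
  hence c: "c = (u l - cosh (k*l) * u 0) / sinh (k*l)" using S k l by (simp add: field_simps)
  have u'0: "u' 0 = k * c" using k by (simp add: c_def)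
  thus "u' 0 = sinh_flux k l (u 0) (u l)" by (simp add: sinh_flux_def c)
  show "u x = sinh_interp k l (u 0) (u l) x" if x: "x \<in> {0..l}" for x
  proof -
    have ux: "u x = u 0 * cosh (k*x) + c * sinh (k*x)" using sol(1)[OF x] by (simp add: c_def)
    have e: "sinh (k*(l-x)) = sinh (k*l) * cosh (k*x) - cosh (k*l) * sinh (k*x)"
      by (simp add: right_diff_distrib sinh_diff)
    show ?thesis unfolding sinh_interp_def ux c e using S k l by (simp add: field_simps)
  qed
  have "u' l = u 0 * k * sinh (k*l) + k * c * cosh (k*l)" using sol(2)[OF lin] by (simp add: u'0)
  moreover have "(cosh (k*l))^2 = (sinh (k*l))^2 + 1" by (rule cosh_square_eq)
  ultimately show "- u' l = sinh_flux k l (u l) (u 0)"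
    unfolding sinh_flux_def ul using S k l by (simp add: field_simps power2_eq_square)
qed

lemma has_integral_sinh_square:
  fixes k L :: real assumes k: "k > 0" and L: "L \<ge> 0"
  shows "((\<lambda>x. (sinh (k*x))^2) has_integral (sinh (k*L) * cosh (k*L) / (2*k) - L/2)) {0..L}"
proof -
  define G where "G x = sinh (2*k*x) / (4*k) - x/2" for x
  have "((\<lambda>x. (sinh (k*x))^2) has_integral (G L - G 0)) {0..L}"
  proof (rule fundamental_theorem_of_calculus[OF L])
    fix x assume "x \<in> {0..L}"
    have "(G has_real_derivative cosh (2*k*x) / 2 - 1/2) (at x within {0..L})"
      unfolding G_def using k by (auto intro!: derivative_eq_intros simp: field_simps)
    moreover have "cosh (2*k*x) / 2 - 1/2 = (sinh (k*x))^2"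
      using cosh_double[of "k*x"] cosh_square_eq[of "k*x"] by (simp add: mult.assoc field_simps)
    ultimately show "(G has_vector_derivative (sinh (k*x))^2) (at x within {0..L})"
      by (simp add: has_real_derivative_iff_has_vector_derivative)
  qed
  moreover have "G L - G 0 = sinh (k*L) * cosh (k*L) / (2*k) - L/2"
    unfolding G_def using k sinh_double[of "k*L"] by (simp add: field_simps mult.assoc)
  ultimately show ?thesis by simp
qed

lemma has_integral_sinh_reflected_square:
  fixes k L :: real assumes k: "k > 0" and L: "L \<ge> 0"
  shows "((\<lambda>x. (sinh (k*(L-x)))^2) has_integral (sinh (k*L) * cosh (k*L) / (2*k) - L/2)) {0..L}"
proof -
  define G where "G x = - sinh (2*k*(L-x)) / (4*k) - x/2" for x
  have "((\<lambda>x. (sinh (k*(L-x)))^2) has_integral (G L - G 0)) {0..L}"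
  proof (rule fundamental_theorem_of_calculus[OF L])
    fix x assume "x \<in> {0..L}"
    have "(G has_real_derivative cosh (2*k*(L-x)) / 2 - 1/2) (at x within {0..L})"
      unfolding G_def using k by (auto intro!: derivative_eq_intros simp: field_simps)
    moreover have "cosh (2*k*(L-x)) / 2 - 1/2 = (sinh (k*(L-x)))^2"
      using cosh_double[of "k*(L-x)"] cosh_square_eq[of "k*(L-x)"] by (simp add: mult.assoc field_simps)
    ultimately show "(G has_vector_derivative (sinh (k*(L-x)))^2) (at x within {0..L})"
      by (simp add: has_real_derivative_iff_has_vector_derivative)
  qed
  moreover have "G L - G 0 = sinh (k*L) * cosh (k*L) / (2*k) - L/2"
    unfolding G_def using k sinh_double[of "k*L"] by (simp add: field_simps mult.assoc)
  ultimately show ?thesis by simp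
qed

lemma has_integral_sinh_product:
  fixes k L :: real assumes k: "k > 0" and L: "L \<ge> 0"
  shows "((\<lambda>x. sinh (k*(L-x)) * sinh (k*x)) has_integral (L * cosh (k*L) / 2 - sinh (k*L) / (2*k))) {0..L}"
proof -
  define G where "G x = x * cosh (k*L) / 2 + sinh (k*(L - 2*x)) / (4*k)" for x
  have "((\<lambda>x. sinh (k*(L-x)) * sinh (k*x)) has_integral (G L - G 0)) {0..L}"
  proof (rule fundamental_theorem_of_calculus[OF L])
    fix x assume "x \<in> {0..L}"
    have "(G has_real_derivative cosh (k*L) / 2 - cosh (k*(L - 2*x)) / 2) (at x within {0..L})"
      unfolding G_def using k by (auto intro!: derivative_eq_intros simp: field_simps)
    moreover have "cosh (k*L) / 2 - cosh (k*(L - 2*x)) / 2 = sinh (k*(L-x)) * sinh (k*x)"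
    proof -
      have a: "cosh (k*L) = cosh (k*(L-x)) * cosh (k*x) + sinh (k*(L-x)) * sinh (k*x)"
        using cosh_add[of "k*(L-x)" "k*x"] by (simp add: algebra_simps)
      have b: "cosh (k*(L-2*x)) = cosh (k*(L-x)) * cosh (k*x) - sinh (k*(L-x)) * sinh (k*x)"
        using cosh_diff[of "k*(L-x)" "k*x"] by (simp add: algebra_simps)
      show ?thesis unfolding a b by (simp add: field_simps)
    qed
    ultimately show "(G has_vector_derivative sinh (k*(L-x)) * sinh (k*x)) (at x within {0..L})"
      by (simp add: has_real_derivative_iff_has_vector_derivative)
  qed
  moreover have "G L - G 0 = L * cosh (k*L) / 2 - sinh (k*L) / (2*k)"
    unfolding G_def using k by (simp add: field_simps)
  ultimately show ?thesis by simp
qed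

text \<open>The Gram matrix of \<open>sinh (k(L-x))\<close> and \<open>sinh (kx)\<close> is positive definite, so the
\<open>L\<^sup>2\<close> norm of an edge solution controls its boundary values.\<close>

lemma sinh_interp_square_integral_ge:
  fixes k L :: real assumes k: "k > 0" and L: "L > 0"
  obtains c where "c > 0" "\<And>a b. c * a^2 \<le> integral {0..L} (\<lambda>x. (sinh_interp k L a b x)^2)"
proof -
  define s where "s = sinh (k*L)"
  define C where "C = cosh (k*L)"
  define P where "P = s * C / (2*k) - L/2"
  define Q where "Q = L * C / 2 - s / (2*k)"
  have s0: "s > 0" using k L by (simp add: s_def)
  have C1: "C > 1" using cosh_gt_1[of "k*L"] k L by (simp add: C_def)
  have "P - Q = (1 + C) * (s/(2*k) - L/2)" using k by (simp add: P_def Q_def field_simps)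
  moreover have "s/(2*k) - L/2 > 0" using sinh_gt_self[of "k*L"] k L by (simp add: s_def field_simps)
  ultimately have p1: "P - Q > 0" using C1 by simp
  have "P + Q = (C - 1) * (s/(2*k) + L/2)" using k by (simp add: P_def Q_def field_simps)
  moreover have "s/(2*k) + L/2 > 0" using s0 k L by (simp add: field_simps add_pos_pos)
  ultimately have p2: "P + Q > 0" using C1 by simp
  have pabs: "P - \<bar>Q\<bar> > 0" using p1 p2 by linarith
  show ?thesis
  proof (rule that[of "(P - \<bar>Q\<bar>) / s^2"])
    show "(P - \<bar>Q\<bar>) / s^2 > 0" using pabs s0 by simp
    fix a b
    have eq: "(sinh_interp k L a b x)^2 = (a^2/s^2) * (sinh (k*(L-x)))^2 + (b^2/s^2) * (sinh (k*x))^2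
        + (2*a*b/s^2) * (sinh (k*(L-x)) * sinh (k*x))" for x
      using s0 unfolding sinh_interp_def s_def[symmetric] by (simp add: power2_eq_square field_simps)
    have "((\<lambda>x. (sinh_interp k L a b x)^2) has_integral
        ((a^2/s^2) * P + (b^2/s^2) * P + (2*a*b/s^2) * Q)) {0..L}"
      unfolding eq P_def Q_def s_def C_def using L
      by (intro has_integral_add has_integral_mult_right has_integral_sinh_square
          has_integral_sinh_reflected_square has_integral_sinh_product k) simp_all
    hence I: "integral {0..L} (\<lambda>x. (sinh_interp k L a b x)^2) = ((a^2 + b^2) * P + 2*a*b*Q) / s^2"
      by (simp add: integral_unique add_divide_distrib distrib_right)
    have "\<bar>2*a*b\<bar> \<le> a^2 + b^2"
      using sum_squares_bound[of a b] sum_squares_bound[of a "-b"] by (simp add: abs_le_iff)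
    hence "\<bar>2*a*b*Q\<bar> \<le> (a^2 + b^2) * \<bar>Q\<bar>" by (simp add: abs_mult mult_right_mono)
    moreover have "0 \<le> b^2 * (P - \<bar>Q\<bar>)" using pabs by simp
    ultimately have "a^2 * (P - \<bar>Q\<bar>) \<le> (a^2 + b^2) * P + 2*a*b*Q"
      by (simp add: algebra_simps abs_le_iff)
    thus "(P - \<bar>Q\<bar>) / s^2 * a^2 \<le> integral {0..L} (\<lambda>x. (sinh_interp k L a b x)^2)"
      unfolding I using s0 by (simp add: divide_right_mono mult.commute)
  qed
qed

lemma abs_sinh_interp_le:
  fixes k L a b x :: real
  assumes k: "k > 0" and L: "L > 0" and x: "x \<in> {0..L}"
  shows "\<bar>sinh_interp k L a b x\<bar> \<le> \<bar>a\<bar> + \<bar>b\<bar>"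
proof -
  have S: "sinh (k*L) > 0" using k L by simp
  have "\<bar>a * sinh (k*(L - x))\<bar> \<le> \<bar>a\<bar> * sinh (k*L)" using x k by (simp add: abs_mult mult_left_mono)
  moreover have "\<bar>b * sinh (k*x)\<bar> \<le> \<bar>b\<bar> * sinh (k*L)" using x k by (simp add: abs_mult mult_left_mono)
  ultimately have "\<bar>a * sinh (k*(L - x)) + b * sinh (k*x)\<bar> \<le> (\<bar>a\<bar> + \<bar>b\<bar>) * sinh (k*L)"
    by (smt (verit) abs_triangle_ineq distrib_right)
  thus ?thesis unfolding sinh_interp_def using S by (simp add: divide_le_eq)
qed

lemma integral_square_le:
  fixes f :: "real \<Rightarrow> real"
  assumes L: "L \<ge> 0" and c: "continuous_on {0..L} f" and b: "\<And>x. x \<in> {0..L} \<Longrightarrow> (f x)^2 \<le> M"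
  shows "integral {0..L} (\<lambda>x. (f x)^2) \<le> L * M"
proof -
  have "integral {0..L} (\<lambda>x. (f x)^2) \<le> integral {0..L} (\<lambda>x. M)"
    by (rule integral_le) (auto intro!: integrable_continuous_real continuous_intros c b)
  thus ?thesis using L by simp
qed

section \<open>Functions on the chain\<close>

lemma chain_len_nonzero_ring: "j \<noteq> 0 \<Longrightarrow> chain_len \<theta> (j, b) = pi"
  by (simp add: chain_len_def)

lemma chain_len_straight: "chain_len 0 e = pi"
  by (simp add: chain_len_def)

lemma chain_len_pos: "0 \<le> \<theta> \<Longrightarrow> \<theta> < pi \<Longrightarrow> chain_len \<theta> e > 0"
  by (auto simp: chain_len_def)

lemma chain_len_le: "0 \<le> \<theta> \<Longrightarrow> \<theta> < pi \<Longrightarrow> chain_len \<theta> e \<le> 2*pi"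
  by (auto simp: chain_len_def)

lemma chain_len_reflect: "chain_len \<theta> (- j, b) = chain_len \<theta> (j, b)"
  by (simp add: chain_len_def)

text \<open>The sum of the outgoing derivatives at the vertex \<open>v\<^sub>j\<close> of the function which solves
\<open>\<psi>'' = k\<^sup>2 \<psi>\<close> on every edge and takes the values \<open>u\<close> at the vertices.\<close>

definition vertex_flux :: "(edge \<Rightarrow> real) \<Rightarrow> real \<Rightarrow> (int \<Rightarrow> real) \<Rightarrow> int \<Rightarrow> real" where
  "vertex_flux l k u j =
     sinh_flux k (l (j, True)) (u j) (u (j+1)) + sinh_flux k (l (j, False)) (u j) (u (j+1)) +
     sinh_flux k (l (j-1, True)) (u j) (u (j-1)) + sinh_flux k (l (j-1, False)) (u j) (u (j-1))"

definition sinh_extension :: "(edge \<Rightarrow> real) \<Rightarrow> real \<Rightarrow> (int \<Rightarrow> real) \<Rightarrow> gfun" where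
  "sinh_extension l k u e = sinh_interp k (l e) (u (fst e)) (u (fst e + 1))"

lemma sinh_extension_ends:
  assumes "sinh (k * l (j, b)) \<noteq> 0"
  shows "sinh_extension l k u (j, b) 0 = u j" "sinh_extension l k u (j, b) (l (j, b)) = u (j+1)"
  using assms by (simp_all add: sinh_extension_def sinh_interp_def)

lemma eigenfunction_eq_sinh_extension:
  fixes l :: "edge \<Rightarrow> real" and \<psi> :: gfun
  assumes H: "H_rel l \<alpha> \<psi> (\<lambda>e x. - (k^2) * \<psi> e x)" and k: "k > 0" and l: "\<And>e. l e > 0"
  defines "u \<equiv> \<lambda>j. \<psi> (j, True) 0"
  shows "\<And>e x. x \<in> {0..l e} \<Longrightarrow> \<psi> e x = sinh_extension l k u e x"
    and "\<And>j. vertex_flux l k u j = \<alpha> * u j"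
proof -
  obtain \<psi>' \<psi>'' where W: "\<And>e. edge_W22 (l e) (\<psi> e) (\<psi>' e) (\<psi>'' e)"
    and ae: "ae_eq_graph l (\<lambda>e x. - (k^2) * \<psi> e x) (\<lambda>e x. - \<psi>'' e x)"
    and dc: "delta_cond l \<alpha> \<psi> \<psi>'"
    using H unfolding H_rel_def by blast
  have ends: "\<psi> (j, b) 0 = u j" "\<psi> (j, b) (l (j, b)) = u (j+1)" for j b
    using dc unfolding delta_cond_def u_def by (cases b; simp; metis add_diff_cancel_right')+
  have "negligible {x \<in> {0..l e}. k^2 * \<psi> e x \<noteq> \<psi>'' e x}" for e
    using ae unfolding ae_eq_graph_def by (cases e) simp
  note edge = edge_eigenfunction_eq_sinh_interp[OF l k W this]
  show "\<psi> e x = sinh_extension l k u e x" if "x \<in> {0..l e}" for e x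
    using edge(1)[OF that] ends[of "fst e" "snd e"] by (simp add: sinh_extension_def)
  fix j
  have "\<psi>' (j, True) 0 + \<psi>' (j, False) 0 - \<psi>' (j - 1, True) (l (j - 1, True))
        - \<psi>' (j - 1, False) (l (j - 1, False)) = \<alpha> * u j"
    using dc unfolding delta_cond_def u_def by blast
  thus "vertex_flux l k u j = \<alpha> * u j"
    using edge(2)[of "(j, True)"] edge(2)[of "(j, False)"] edge(3)[of "(j-1, True)"] edge(3)[of "(j-1, False)"]
    by (simp add: vertex_flux_def ends)
qed

lemma summable_on_edges_side:
  fixes a :: "edge \<Rightarrow> real"
  assumes "a summable_on UNIV"
  shows "(\<lambda>j. a (j, b)) summable_on UNIV"
proof -
  have "a summable_on range (\<lambda>j. (j, b))" by (rule summable_on_subset_banach[OF assms]) auto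
  thus ?thesis by (subst (asm) summable_on_reindex) (auto simp: inj_on_def o_def)
qed

lemma summable_on_edges_fst:
  fixes a :: "int \<Rightarrow> real"
  assumes s: "a summable_on UNIV"
  shows "(\<lambda>e::edge. a (fst e)) summable_on UNIV"
proof -
  have r: "(\<lambda>e::edge. a (fst e)) summable_on range (\<lambda>j. (j, b))" for b
    by (subst summable_on_reindex) (auto simp: inj_on_def o_def s)
  have "(\<lambda>e::edge. a (fst e)) summable_on (range (\<lambda>j. (j, True)) \<union> range (\<lambda>j. (j, False)))"
    by (rule summable_on_Un_disjoint[OF r r]) auto
  moreover have "range (\<lambda>j. (j, True)) \<union> range (\<lambda>j. (j, False)) = (UNIV :: edge set)"
    by auto
  ultimately show ?thesis by simp
qed

lemma summable_on_int_shift: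
  fixes a :: "int \<Rightarrow> real"
  assumes s: "a summable_on UNIV"
  shows "(\<lambda>j. a (j + c)) summable_on UNIV"
proof -
  have "bij_betw (\<lambda>j. j + c) UNIV UNIV"
    by (rule bij_betwI[of _ _ _ "\<lambda>j. j - c"]) auto
  thus ?thesis using summable_on_reindex_bij_betw[of "\<lambda>j. j + c" UNIV UNIV a] s by simp
qed

lemma vertex_values_tendsto_0:
  fixes \<psi> :: gfun and u :: "int \<Rightarrow> real"
  assumes L2: "L2_graph l \<psi>" and k: "k > 0" and L: "L > 0"
    and edges: "\<forall>\<^sub>F j in cofinite. l (j, True) = L \<and>
                   (\<forall>x\<in>{0..L}. \<psi> (j, True) x = sinh_interp k L (u j) (u (j+1)) x)"
  shows "(u \<longlongrightarrow> 0) cofinite"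
proof -
  define I where "I j = integral {0..l (j, True)} (\<lambda>x. (\<psi> (j, True) x)^2)" for j
  have "I summable_on UNIV"
    using summable_on_edges_side[of _ True] L2 unfolding L2_graph_def I_def by blast
  hence I: "(I \<longlongrightarrow> 0) cofinite"
    by (rule tendsto_zero_cofinite_if_summable_on)
       (use L2 in \<open>auto simp: I_def L2_graph_def intro!: integral_nonneg\<close>)
  obtain c where c: "c > 0" and low: "\<And>a b. c * a^2 \<le> integral {0..L} (\<lambda>x. (sinh_interp k L a b x)^2)"
    using sinh_interp_square_integral_ge[OF k L] by blast
  have "\<forall>\<^sub>F j in cofinite. c * (u j)^2 \<le> I j"
    using edges
  proof eventually_elim
    case (elim j)
    hence "I j = integral {0..L} (\<lambda>x. (sinh_interp k L (u j) (u (j+1)) x)^2)"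
      unfolding I_def by (auto intro: integral_cong)
    thus ?case using low by simp
  qed
  from tendsto_zero_if_square_le[OF c this I] show ?thesis .
qed

lemma square_integrable_add:
  fixes f g :: "real \<Rightarrow> real"
  assumes S: "S \<in> sets lebesgue" and fm: "f measurable_on S" and gm: "g measurable_on S"
    and fi: "(\<lambda>x. (f x)^2) integrable_on S" and gi: "(\<lambda>x. (g x)^2) integrable_on S"
  shows "(\<lambda>x. (f x + g x)^2) integrable_on S"
    "integral S (\<lambda>x. (f x + g x)^2) \<le> 2 * integral S (\<lambda>x. (f x)^2) + 2 * integral S (\<lambda>x. (g x)^2)"
proof -
  have bi: "(\<lambda>x. 2 * (f x)^2 + 2 * (g x)^2) integrable_on S"
    using integrable_add[OF integrable_on_cmult_left[OF fi, of 2] integrable_on_cmult_left[OF gi, of 2]]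
    by simp
  show sq: "(\<lambda>x. (f x + g x)^2) integrable_on S"
  proof (rule measurable_bounded_by_integrable_imp_integrable_real[OF _ bi _ S])
    have "f \<in> borel_measurable (lebesgue_on S)" "g \<in> borel_measurable (lebesgue_on S)"
      using fm gm S by (simp_all add: measurable_on_iff_borel_measurable)
    thus "(\<lambda>x. (f x + g x)^2) \<in> borel_measurable (lebesgue_on S)" by measurable
  qed (auto intro: square_sum_le)
  show "integral S (\<lambda>x. (f x + g x)^2) \<le> 2 * integral S (\<lambda>x. (f x)^2) + 2 * integral S (\<lambda>x. (g x)^2)"
    using integral_le[OF sq bi square_sum_le] integrable_on_cmult_left[OF fi, of 2]
      integrable_on_cmult_left[OF gi, of 2] by (simp add: integral_add)
qed

lemma L2_graph_if_integral_bound: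
  fixes l :: "edge \<Rightarrow> real" and \<psi> :: gfun
  assumes c: "\<And>e. continuous_on {0..l e} (\<psi> e)"
    and b: "\<And>e. integral {0..l e} (\<lambda>x. (\<psi> e x)^2) \<le> B e" and s: "B summable_on UNIV"
  shows "L2_graph l \<psi>"
  unfolding L2_graph_def
proof (intro conjI allI)
  fix e
  show "\<psi> e measurable_on {0..l e}"
    using c[of e] by (simp add: measurable_on_iff_borel_measurable continuous_imp_measurable_on_sets_lebesgue)
  show "(\<lambda>x. (\<psi> e x)^2) integrable_on {0..l e}"
    by (intro integrable_continuous_real continuous_intros c)
next
  show "(\<lambda>e. integral {0..l e} (\<lambda>x. (\<psi> e x)^2)) summable_on UNIV"
    by (rule summable_on_comparison_test[OF s])
       (auto intro!: b integral_nonneg integrable_continuous_real continuous_intros c)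
qed

lemma L2_graph_if_pointwise_bound:
  fixes l :: "edge \<Rightarrow> real" and \<psi> :: gfun
  assumes c: "\<And>e. continuous_on {0..l e} (\<psi> e)" and l: "\<And>e. 0 \<le> l e \<and> l e \<le> M"
    and b: "\<And>e x. x \<in> {0..l e} \<Longrightarrow> (\<psi> e x)^2 \<le> B e" and s: "B summable_on UNIV"
  shows "L2_graph l \<psi>"
proof (rule L2_graph_if_integral_bound[OF c])
  show "(\<lambda>e. M * B e) summable_on UNIV" by (rule summable_on_cmult_right[OF s])
  fix e
  have "B e \<ge> 0" using b[of 0 e] l[of e] by (smt (verit) atLeastAtMost_iff zero_le_power2)
  hence "l e * B e \<le> M * B e" using l[of e] by (simp add: mult_right_mono)
  thus "integral {0..l e} (\<lambda>x. (\<psi> e x)^2) \<le> M * B e"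
    using integral_square_le[OF _ c b] l[of e] by (meson order_trans)
qed

lemma L2_graph_cmult:
  assumes "L2_graph l \<psi>"
  shows "L2_graph l (\<lambda>e x. c * \<psi> e x)"
  unfolding L2_graph_def
proof (intro conjI allI)
  fix e
  show "(\<lambda>x. c * \<psi> e x) measurable_on {0..l e}"
    using assms unfolding L2_graph_def by (intro measurable_on_cmul) blast
  have "(\<lambda>x. (\<psi> e x)^2) integrable_on {0..l e}" using assms unfolding L2_graph_def by blast
  from integrable_on_cmult_left[OF this, of "c^2"]
  show "(\<lambda>x. (c * \<psi> e x)^2) integrable_on {0..l e}" by (simp add: power_mult_distrib)
next
  have "(\<lambda>e. integral {0..l e} (\<lambda>x. (\<psi> e x)^2)) summable_on UNIV"
    using assms unfolding L2_graph_def by blast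
  from summable_on_cmult_right[OF this, of "c^2"]
  show "(\<lambda>e. integral {0..l e} (\<lambda>x. (c * \<psi> e x)^2)) summable_on UNIV"
    by (simp add: power_mult_distrib)
qed

lemma L2_graph_add:
  assumes f: "L2_graph l f" and g: "L2_graph l g"
  shows "L2_graph l (\<lambda>e x. f e x + g e x)"
proof -
  have fm: "f e measurable_on {0..l e}" and gm: "g e measurable_on {0..l e}"
    and fi: "(\<lambda>x. (f e x)^2) integrable_on {0..l e}" and gi: "(\<lambda>x. (g e x)^2) integrable_on {0..l e}"
    for e using f g unfolding L2_graph_def by blast+
  note sq = square_integrable_add[OF _ fm gm fi gi, simplified]
  show ?thesis
    unfolding L2_graph_def
  proof (intro conjI allI sq(1))
    show "(\<lambda>x. f e x + g e x) measurable_on {0..l e}" for e by (intro measurable_on_add fm gm)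
    have "(\<lambda>e. 2 * integral {0..l e} (\<lambda>x. (f e x)^2) + 2 * integral {0..l e} (\<lambda>x. (g e x)^2))
        summable_on UNIV"
      using f g unfolding L2_graph_def by (intro summable_on_add summable_on_cmult_right) blast+
    thus "(\<lambda>e. integral {0..l e} (\<lambda>x. (f e x + g e x)^2)) summable_on UNIV"
      by (rule summable_on_comparison_test) (auto intro: integral_nonneg sq)
  qed
qed

lemma L2_graph_sinh_extension:
  fixes u :: "int \<Rightarrow> real"
  assumes k: "k > 0" and l: "\<And>e. 0 < l e \<and> l e \<le> M" and u: "(\<lambda>j. (u j)^2) summable_on UNIV"
  shows "L2_graph l (sinh_extension l k u)"
proof (rule L2_graph_if_pointwise_bound)
  show "continuous_on {0..l e} (sinh_extension l k u e)" for e
    unfolding sinh_extension_def sinh_interp_def using k l[of e] by (intro continuous_intros) simp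
  show "0 \<le> l e \<and> l e \<le> M" for e using l[of e] by simp
  show "(sinh_extension l k u e x)^2 \<le> 2 * (u (fst e))^2 + 2 * (u (fst e + 1))^2" if "x \<in> {0..l e}" for e x
  proof -
    have "(sinh_extension l k u e x)^2 \<le> (\<bar>u (fst e)\<bar> + \<bar>u (fst e + 1)\<bar>)^2"
      using abs_le_imp_square_le[OF abs_sinh_interp_le[OF k _ that]] l[of e] by (simp add: sinh_extension_def)
    also have "\<dots> \<le> 2 * (u (fst e))^2 + 2 * (u (fst e + 1))^2"
      using square_sum_le[of "\<bar>u (fst e)\<bar>" "\<bar>u (fst e + 1)\<bar>"] by simp
    finally show ?thesis .
  qed
  show "(\<lambda>e::edge. 2 * (u (fst e))^2 + 2 * (u (fst e + 1))^2) summable_on UNIV"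
    using summable_on_edges_fst[OF u] summable_on_edges_fst[OF summable_on_int_shift[OF u, of 1]]
    by (intro summable_on_cmult_right summable_on_add) auto
qed

lemma H_rel_sinh_extension:
  fixes l :: "edge \<Rightarrow> real" and u :: "int \<Rightarrow> real"
  assumes k: "k > 0" and l: "\<And>e. l e > 0"
    and flux: "\<And>j. vertex_flux l k u j = \<alpha> * u j"
    and L2: "L2_graph l (sinh_extension l k u)"
  shows "H_rel l \<alpha> (sinh_extension l k u) (\<lambda>e x. - (k^2) * sinh_extension l k u e x)"
  unfolding H_rel_def
proof (intro conjI L2 L2_graph_cmult exI)
  define \<psi> where "\<psi> = sinh_extension l k u"
  define \<psi>' where "\<psi>' = (\<lambda>e x. k * (u (fst e + 1) * cosh (k*x) - u (fst e) * cosh (k*(l e - x))) / sinh (k * l e))"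
  define \<psi>'' where "\<psi>'' = (\<lambda>e x. k^2 * \<psi> e x)"
  show "\<forall>e. edge_W22 (l e) (sinh_extension l k u e) (\<psi>' e) (\<psi>'' e)"
  proof (intro allI edge_W22_if_derivatives)
    fix e x
    show "(sinh_extension l k u e has_real_derivative \<psi>' e x) (at x within {0..l e})"
      unfolding sinh_extension_def sinh_interp_def \<psi>'_def using k l[of e]
      by (auto intro!: derivative_eq_intros simp: field_simps)
    show "(\<psi>' e has_real_derivative \<psi>'' e x) (at x within {0..l e})"
      unfolding \<psi>_def sinh_extension_def sinh_interp_def \<psi>'_def \<psi>''_def using k l[of e]
      by (auto intro!: derivative_eq_intros simp: field_simps power2_eq_square)
    show "continuous_on {0..l e} (\<psi>'' e)"
      unfolding \<psi>''_def \<psi>_def sinh_extension_def sinh_interp_def using l[of e] k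
      by (intro continuous_intros) simp
  qed
  show "ae_eq_graph l (\<lambda>e x. - (k^2) * sinh_extension l k u e x) (\<lambda>e x. - \<psi>'' e x)"
    unfolding ae_eq_graph_def \<psi>''_def \<psi>_def by simp
  have ends: "sinh_extension l k u (j, b) 0 = u j" "sinh_extension l k u (j, b) (l (j, b)) = u (j+1)" for j b
    using sinh_extension_ends k l[of "(j, b)"] by simp_all
  show "delta_cond l \<alpha> (sinh_extension l k u) \<psi>'"
    unfolding delta_cond_def
  proof (intro allI conjI)
    fix j :: int
    show "sinh_extension l k u (j - 1, True) (l (j - 1, True)) = sinh_extension l k u (j, True) 0"
      "sinh_extension l k u (j - 1, False) (l (j - 1, False)) = sinh_extension l k u (j, True) 0"
      "sinh_extension l k u (j, False) 0 = sinh_extension l k u (j, True) 0" by (simp_all add: ends)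
    have "\<psi>' (j, True) 0 + \<psi>' (j, False) 0 - \<psi>' (j - 1, True) (l (j - 1, True))
        - \<psi>' (j - 1, False) (l (j - 1, False)) = vertex_flux l k u j"
      unfolding \<psi>'_def vertex_flux_def sinh_flux_def by (simp add: algebra_simps diff_divide_distrib)
    thus "\<psi>' (j, True) 0 + \<psi>' (j, False) 0 - \<psi>' (j - 1, True) (l (j - 1, True))
        - \<psi>' (j - 1, False) (l (j - 1, False)) = \<alpha> * sinh_extension l k u (j, True) 0"
      by (simp add: flux ends)
  qed
qed

text \<open>For \<open>E = -k\<^sup>2\<close>, half the trace of the transfer matrix over one period of the straight chain.\<close>

definition chain_discriminant :: "real \<Rightarrow> real \<Rightarrow> real" where
  "chain_discriminant \<alpha> k = cosh (k*pi) + \<alpha> * sinh (k*pi) / (4*k)"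

lemma vertex_flux_regular:
  fixes l :: "edge \<Rightarrow> real" and u :: "int \<Rightarrow> real"
  assumes k: "k > 0"
    and l: "l (j, True) = pi" "l (j, False) = pi" "l (j-1, True) = pi" "l (j-1, False) = pi"
  shows "vertex_flux l k u j - \<alpha> * u j
      = 2*k / sinh (k*pi) * (u (j+1) + u (j-1) - 2 * chain_discriminant \<alpha> k * u j)"
proof -
  have s: "sinh (k*pi) > 0" using k by simp
  show ?thesis
    unfolding vertex_flux_def sinh_flux_def chain_discriminant_def l using k s
    by (simp add: field_simps)
qed

lemma vertex_flux_regular_iff:
  fixes l :: "edge \<Rightarrow> real" and u :: "int \<Rightarrow> real"
  assumes k: "k > 0"
    and l: "l (j, True) = pi" "l (j, False) = pi" "l (j-1, True) = pi" "l (j-1, False) = pi"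
  shows "vertex_flux l k u j = \<alpha> * u j \<longleftrightarrow> u (j+1) + u (j-1) = 2 * chain_discriminant \<alpha> k * u j"
proof -
  have "2*k / sinh (k*pi) \<noteq> 0" using k by simp
  with vertex_flux_regular[OF k l, of u \<alpha>] show ?thesis by (metis eq_iff_diff_eq_0 mult_eq_0_iff)
qed

lemma sinh_flux_same_values:
  "k > 0 \<Longrightarrow> L > 0 \<Longrightarrow> sinh_flux k L a a = - (k * tanh (k*L/2)) * a"
  using cosh_minus_1_div_sinh[of "k*L"] by (simp add: sinh_flux_def field_simps)

lemma symmetric_recurrence:
  fixes u :: "int \<Rightarrow> real"
  assumes sym: "\<And>j. u (1 - j) = u j"
    and rec: "\<And>j. j \<ge> 1 \<Longrightarrow> \<exists>D>1. u (j+1) + u (j-1) = 2*D*u j"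
  shows "\<exists>D>1. u (j+1) + u (j-1) = 2*D*u j"
proof (cases "j \<ge> 1")
  case False
  then obtain D where "D > 1" "u ((1-j)+1) + u ((1-j)-1) = 2*D*u (1-j)" using rec[of "1-j"] by auto
  moreover have "u ((1-j)+1) = u (j-1)" "u ((1-j)-1) = u (j+1)" "u (1-j) = u j"
    using sym[of "j-1"] sym[of "j+1"] sym[of j] by simp_all
  ultimately show ?thesis by auto
qed (use rec in blast)

lemma ae_eq_0_if_vertex_values_eq_0:
  assumes "\<And>e x. x \<in> {0..l e} \<Longrightarrow> \<psi> e x = sinh_extension l k u e x" and "\<And>j. u j = 0"
  shows "ae_eq_graph l \<psi> (\<lambda>e x. 0)"
proof -
  have "{x \<in> {0..l e}. \<psi> e x \<noteq> 0} = {}" for e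
    using assms by (auto simp: sinh_extension_def sinh_interp_def)
  thus ?thesis unfolding ae_eq_graph_def by (simp only: negligible_empty simp_thms)
qed


section \<open>No negative eigenvalues of \<open>H\<^sup>+\<close> for \<open>\<alpha> \<ge> 0\<close>\<close>

lemma chain_discriminant_gt_1_if_nonneg: "k > 0 \<Longrightarrow> \<alpha> \<ge> 0 \<Longrightarrow> chain_discriminant \<alpha> k > 1"
  unfolding chain_discriminant_def using cosh_gt_1[of "k*pi"]
  by (smt (verit) divide_nonneg_pos mult_nonneg_nonneg sinh_real_pos_iff pi_gt_zero mult_pos_pos)

lemma ring1_vertex_recurrence:
  fixes u :: "int \<Rightarrow> real"
  assumes \<theta>: "0 \<le> \<theta>" "\<theta> < pi" and k: "k > 0" and \<alpha>: "\<alpha> \<ge> 0" and u01: "u 0 = u 1"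
    and flux: "vertex_flux (chain_len \<theta>) k u 1 = \<alpha> * u 1"
  shows "\<exists>D>1. u 2 + u 0 = 2*D*u 1"
proof -
  have c: "cosh (k*pi) > 1" and s: "sinh (k*pi) > 0" using cosh_gt_1[of "k*pi"] k by simp_all
  define t where "t = k * tanh (k * (pi+\<theta>) / 2) + k * tanh (k * (pi-\<theta>) / 2)"
  have t: "t \<ge> 0" using k \<theta> by (simp add: t_def)
  define X where "X = k * (u 2 - cosh (k*pi) * u 1) / sinh (k*pi)"
  have "vertex_flux (chain_len \<theta>) k u 1 = 2 * X - t * u 1"
    using sinh_flux_same_values[OF k, of "pi+\<theta>" "u 1"] sinh_flux_same_values[OF k, of "pi-\<theta>" "u 1"] \<theta>
    by (simp add: vertex_flux_def chain_len_def u01 t_def sinh_flux_def X_def algebra_simps)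
  hence "X = (\<alpha> + t) * u 1 / 2" using flux by (simp add: algebra_simps)
  hence u2: "u 2 = (cosh (k*pi) + (\<alpha> + t) * sinh (k*pi) / (2*k)) * u 1"
    using k s unfolding X_def by (simp add: field_simps)
  define Y where "Y = (\<alpha> + t) * sinh (k*pi) / (2*k)"
  have "u 2 + u 0 = 2 * ((1 + cosh (k*pi) + Y) / 2) * u 1"
    using u01 u2 by (simp add: Y_def algebra_simps)
  moreover have "Y \<ge> 0" using s k \<alpha> t by (simp add: Y_def)
  hence "(1 + cosh (k*pi) + Y) / 2 > 1" using c by (simp add: field_simps)
  ultimately show ?thesis by (intro exI[of _ "(1 + cosh (k*pi) + Y) / 2"]) simp
qed

lemma even_fn_vertex_values_reflect:
  fixes \<psi> :: gfun and u :: "int \<Rightarrow> real"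
  assumes \<theta>: "0 \<le> \<theta>" "\<theta> < pi" and k: "k > 0" and even: "even_fn (chain_len \<theta>) \<psi>"
    and ext: "\<And>e x. x \<in> {0..chain_len \<theta> e} \<Longrightarrow> \<psi> e x = sinh_extension (chain_len \<theta>) k u e x"
  shows "u (1 - j) = u j"
proof -
  have lpos: "chain_len \<theta> e > 0" for e using chain_len_pos[OF \<theta>] .
  have "0 \<in> {0..chain_len \<theta> (j, True)}" using lpos[of "(j, True)"] by simp
  from even[unfolded even_fn_def, rule_format, OF this]
  have "\<psi> (- j, True) (chain_len \<theta> (- j, True)) = \<psi> (j, True) 0" by (simp add: chain_len_reflect)
  moreover have "\<psi> (j, True) 0 = u j"
    using ext[of 0 "(j, True)"] lpos[of "(j, True)"] sinh_extension_ends(1)[of k "chain_len \<theta>" j True u] k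
    by simp
  moreover have "\<psi> (- j, True) (chain_len \<theta> (- j, True)) = u (- j + 1)"
    using ext[of "chain_len \<theta> (- j, True)" "(- j, True)"] lpos[of "(- j, True)"]
      sinh_extension_ends(2)[of k "chain_len \<theta>" "- j" True u] k by simp
  ultimately show ?thesis by simp
qed

text \<open>An even eigenfunction with \<open>E = -k\<^sup>2\<close> has vertex values with \<open>u\<^sub>1\<^sub>-\<^sub>j = u\<^sub>j\<close>; the
\<open>\<delta>\<close>-condition at \<open>v\<^sub>1\<close> then sees ring \<open>0\<close> only through the positive terms \<open>k tanh (k \<ell>/2)\<close>,
so every vertex carries a recurrence coefficient \<open>> 1\<close> and the maximum principle applies.\<close>

lemma even_eigenvalue_nonneg:
  fixes \<alpha> \<theta> E :: real
  assumes \<theta>: "0 < \<theta>" "\<theta> < pi" and \<alpha>: "\<alpha> \<ge> 0" and ev: "even_eigenvalue \<theta> \<alpha> E"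
  shows "E \<ge> 0"
proof (rule ccontr)
  assume "\<not> E \<ge> 0"
  define k where "k = sqrt (- E)"
  have k: "k > 0" and Ek: "E = - (k^2)" using \<open>\<not> E \<ge> 0\<close> by (simp_all add: k_def)
  define l where "l = chain_len \<theta>"
  obtain \<psi> where H: "H_rel l \<alpha> \<psi> (\<lambda>e x. - (k^2) * \<psi> e x)" and even: "even_fn l \<psi>"
    and nz: "\<not> ae_eq_graph l \<psi> (\<lambda>e x. 0)"
    using ev unfolding even_eigenvalue_def l_def[symmetric] Ek by blast
  have lpos: "l e > 0" for e unfolding l_def by (rule chain_len_pos) (use \<theta> in auto)
  have lpi: "l (j, b) = pi" if "j \<noteq> 0" for j b using that by (simp add: l_def chain_len_nonzero_ring)
  define u where "u j = \<psi> (j, True) 0" for j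
  note ext = eigenfunction_eq_sinh_extension[OF H k lpos, folded u_def]
  have sym: "u (1 - j) = u j" for j
    using even_fn_vertex_values_reflect[of \<theta> k \<psi> u] \<theta> k even ext(1) by (simp add: l_def)
  have rec: "\<exists>D>1. u (j+1) + u (j-1) = 2*D*u j" if "j \<ge> 1" for j
  proof (cases "j = 1")
    case True
    thus ?thesis using ring1_vertex_recurrence[of \<theta> k \<alpha> u] \<theta> k \<alpha> sym[of 0] ext(2)[of 1] by (simp add: l_def)
  next
    case False
    with that have "j \<noteq> 0" "j - 1 \<noteq> 0" by auto
    hence "u (j+1) + u (j-1) = 2 * chain_discriminant \<alpha> k * u j"
      using vertex_flux_regular_iff[OF k] ext(2)[of j] by (simp add: lpi)
    thus ?thesis using chain_discriminant_gt_1_if_nonneg[OF k \<alpha>] by blast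
  qed
  have "(u \<longlongrightarrow> 0) cofinite"
  proof (rule vertex_values_tendsto_0[OF _ k pi_gt_zero])
    show "L2_graph l \<psi>" using H by (simp add: H_rel_def)
    have "l (j, True) = pi \<and> (\<forall>x\<in>{0..pi}. \<psi> (j, True) x = sinh_interp k pi (u j) (u (j+1)) x)"
      if "j \<noteq> 0" for j using ext(1)[of _ "(j, True)"] lpi[OF that] by (simp add: sinh_extension_def)
    hence "{j. \<not> (l (j, True) = pi \<and> (\<forall>x\<in>{0..pi}. \<psi> (j, True) x = sinh_interp k pi (u j) (u (j+1)) x))}
        \<subseteq> {0}" by blast
    thus "\<forall>\<^sub>F j in cofinite. l (j, True) = pi \<and>
        (\<forall>x\<in>{0..pi}. \<psi> (j, True) x = sinh_interp k pi (u j) (u (j+1)) x)"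
      unfolding eventually_cofinite by (rule finite_subset) simp
  qed
  moreover have "\<exists>D>1. u (j+1) + u (j-1) = 2*D*u j" for j
    using symmetric_recurrence[of u, OF sym rec] by blast
  ultimately have "u j = 0" for j using recurrence_solution_eq_0 by blast
  hence "ae_eq_graph l \<psi> (\<lambda>e x. 0)" using ae_eq_0_if_vertex_values_eq_0[OF ext(1)] by blast
  with nz show False by simp
qed


section \<open>The resolvent set of the straight chain\<close>

lemma straight_eigenfunction_eq_0:
  fixes \<alpha> k :: real
  assumes k: "k > 0" and D: "chain_discriminant \<alpha> k > 1"
    and H: "H_rel (chain_len 0) \<alpha> \<psi> (\<lambda>e x. - (k^2) * \<psi> e x)"
  shows "ae_eq_graph (chain_len 0) \<psi> (\<lambda>e x. 0)"
proof -
  define l where "l = chain_len 0"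
  have lpi: "l e = pi" for e by (simp add: l_def chain_len_straight)
  define u where "u j = \<psi> (j, True) 0" for j
  have lpos: "l e > 0" for e by (simp add: lpi)
  note ext = eigenfunction_eq_sinh_extension[OF H[folded l_def] k lpos, folded u_def]
  have "(u \<longlongrightarrow> 0) cofinite"
  proof (rule vertex_values_tendsto_0[OF _ k pi_gt_zero])
    show "L2_graph l \<psi>" using H by (simp add: H_rel_def l_def)
    show "\<forall>\<^sub>F j in cofinite. l (j, True) = pi \<and>
        (\<forall>x\<in>{0..pi}. \<psi> (j, True) x = sinh_interp k pi (u j) (u (j+1)) x)"
      using ext(1) lpi by (simp add: sinh_extension_def)
  qed
  moreover have "u (j+1) + u (j-1) = 2 * chain_discriminant \<alpha> k * u j" for j
    using vertex_flux_regular_iff[OF k] ext(2)[of j] by (simp add: lpi)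
  ultimately have "u j = 0" for j using recurrence_solution_eq_0 D by blast
  thus ?thesis using ae_eq_0_if_vertex_values_eq_0[OF ext(1)] by (simp add: l_def)
qed

lemma abs_integral_initial_le:
  fixes g :: "real \<Rightarrow> real"
  assumes g: "g absolutely_integrable_on {0..L}" and x: "x \<in> {0..L}"
  shows "\<bar>integral {0..x} g\<bar> \<le> integral {0..L} (\<lambda>x. \<bar>g x\<bar>)"
proof -
  have gi: "g integrable_on {0..L}" and ga: "(\<lambda>x. \<bar>g x\<bar>) integrable_on {0..L}"
    using g unfolding absolutely_integrable_on_def by auto
  have g1: "g integrable_on {0..x}" by (rule integrable_on_subinterval[OF gi]) (use x in auto)
  have g2: "(\<lambda>x. \<bar>g x\<bar>) integrable_on {0..x}" by (rule integrable_on_subinterval[OF ga]) (use x in auto)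
  have "\<bar>integral {0..x} g\<bar> \<le> integral {0..x} (\<lambda>x. \<bar>g x\<bar>)"
    using integral_norm_bound_integral[OF g1 g2] by simp
  also have "\<dots> \<le> integral {0..L} (\<lambda>x. \<bar>g x\<bar>)"
    by (rule integral_subset_le[OF _ g2 ga]) (use x in auto)
  finally show ?thesis .
qed

lemma square_integrable_imp_absolutely_integrable:
  fixes g :: "real \<Rightarrow> real"
  assumes gm: "g measurable_on {0..L}" and gs: "(\<lambda>x. (g x)^2) integrable_on {0..L}"
  shows "g absolutely_integrable_on {0..L}"
proof (rule measurable_bounded_by_integrable_imp_absolutely_integrable)
  show "g \<in> borel_measurable (lebesgue_on {0..L})"
    using gm by (simp add: measurable_on_iff_borel_measurable)
  have "(\<lambda>x. 1 + (g x)^2) integrable_on {0..L}" by (rule integrable_add[OF integrable_const_ivl gs])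
  from integrable_on_cmult_left[OF this, of "1/2"]
  show "(\<lambda>x. (1 + (g x)^2) / 2) integrable_on {0..L}" by simp
  fix x
  have "0 \<le> (\<bar>g x\<bar> - 1)^2" by simp
  thus "norm (g x) \<le> (1 + (g x)^2) / 2" by (simp add: power2_eq_square algebra_simps)
qed simp

lemma square_integral_abs_le:
  fixes g :: "real \<Rightarrow> real"
  assumes L: "L > 0" and gm: "g measurable_on {0..L}" and gs: "(\<lambda>x. (g x)^2) integrable_on {0..L}"
  shows "(integral {0..L} (\<lambda>x. \<bar>g x\<bar>))^2 \<le> L * integral {0..L} (\<lambda>x. (g x)^2)"
proof -
  have gabs: "(\<lambda>x. \<bar>g x\<bar>) integrable_on {0..L}"
    using square_integrable_imp_absolutely_integrable[OF gm gs] unfolding absolutely_integrable_on_def by auto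
  define m where "m = integral {0..L} (\<lambda>x. \<bar>g x\<bar>)"
  define N where "N = integral {0..L} (\<lambda>x. (g x)^2)"
  define a where "a = m / L"
  have "((\<lambda>x. (g x)^2 - 2*a*\<bar>g x\<bar> + a^2) has_integral (N - 2*a*m + a^2 * L)) {0..L}"
  proof (intro has_integral_add has_integral_diff)
    show "((\<lambda>x. (g x)^2) has_integral N) {0..L}" using gs by (simp add: N_def has_integral_integral)
    show "((\<lambda>x. 2*a*\<bar>g x\<bar>) has_integral (2*a*m)) {0..L}"
      using has_integral_mult_right[OF integrable_integral[OF gabs], of "2*a"] by (simp add: m_def)
    show "((\<lambda>x. a^2) has_integral (a^2 * L)) {0..L}"
      using has_integral_const_real[of "a^2" 0 L] L by (simp add: mult.commute)
  qed
  moreover have "(g x)^2 - 2*a*\<bar>g x\<bar> + a^2 = (\<bar>g x\<bar> - a)^2" for x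
    by (simp add: power2_eq_square algebra_simps)
  ultimately have "((\<lambda>x. (\<bar>g x\<bar> - a)^2) has_integral (N - 2*a*m + a^2 * L)) {0..L}" by simp
  hence "0 \<le> N - 2*a*m + a^2 * L" by (rule has_integral_nonneg) simp
  hence "0 \<le> N - m^2 / L" unfolding a_def using L by (simp add: power2_eq_square field_simps)
  thus ?thesis unfolding m_def[symmetric] N_def[symmetric] using L by (simp add: field_simps)
qed

definition cosh_moment :: "real \<Rightarrow> (real \<Rightarrow> real) \<Rightarrow> real \<Rightarrow> real" where
  "cosh_moment k g x = integral {0..x} (\<lambda>y. cosh (k*y) * integral {0..y} g)"

definition sinh_moment :: "real \<Rightarrow> (real \<Rightarrow> real) \<Rightarrow> real \<Rightarrow> real" where
  "sinh_moment k g x = integral {0..x} (\<lambda>y. sinh (k*y) * integral {0..y} g)"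

text \<open>\<open>particular_sol k g x = - \<integral>\<^sub>0\<^sup>x cosh (k(x-y)) G(y) dy\<close> with \<open>G = \<integral>\<^sub>0\<^sup>y g\<close> solves
\<open>Q'' = k\<^sup>2 Q - g\<close>, \<open>Q(0) = Q'(0) = 0\<close>. Expanding \<open>cosh (k(x-y))\<close> makes all derivatives
available through the fundamental theorem of calculus alone: \<open>Q' = R - G\<close> and \<open>R' = k\<^sup>2 Q\<close>
for \<open>R = particular_aux k g\<close>.\<close>

definition particular_sol :: "real \<Rightarrow> (real \<Rightarrow> real) \<Rightarrow> real \<Rightarrow> real" where
  "particular_sol k g x = sinh (k*x) * sinh_moment k g x - cosh (k*x) * cosh_moment k g x"

definition particular_aux :: "real \<Rightarrow> (real \<Rightarrow> real) \<Rightarrow> real \<Rightarrow> real" where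
  "particular_aux k g x = k * (cosh (k*x) * sinh_moment k g x - sinh (k*x) * cosh_moment k g x)"

lemma particular_sol_derivatives:
  fixes g :: "real \<Rightarrow> real" and k :: real
  assumes g: "g integrable_on {0..L}" and x: "x \<in> {0..L}"
  shows "(particular_sol k g has_real_derivative particular_aux k g x - integral {0..x} g) (at x within {0..L})"
    "(particular_aux k g has_real_derivative k^2 * particular_sol k g x) (at x within {0..L})"
proof -
  have cG: "continuous_on {0..L} (\<lambda>y. integral {0..y} g)" by (rule indefinite_integral_continuous_1[OF g])
  have dc: "(cosh_moment k g has_real_derivative cosh (k*x) * integral {0..x} g) (at x within {0..L})"
    unfolding cosh_moment_def[abs_def] has_real_derivative_iff_has_vector_derivative
    by (intro integral_has_vector_derivative continuous_intros cG x)
  have ds: "(sinh_moment k g has_real_derivative sinh (k*x) * integral {0..x} g) (at x within {0..L})"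
    unfolding sinh_moment_def[abs_def] has_real_derivative_iff_has_vector_derivative
    by (intro integral_has_vector_derivative continuous_intros cG x)
  have ch: "(cosh (k*x))^2 = (sinh (k*x))^2 + 1" by (rule cosh_square_eq)
  have "(particular_sol k g has_real_derivative
      (cosh (k*x) * k * sinh_moment k g x + sinh (k*x) * (sinh (k*x) * integral {0..x} g))
      - (sinh (k*x) * k * cosh_moment k g x + cosh (k*x) * (cosh (k*x) * integral {0..x} g)))
      (at x within {0..L})"
    unfolding particular_sol_def[abs_def] by (auto intro!: derivative_eq_intros dc ds)
  moreover have "(cosh (k*x))^2 * integral {0..x} g = ((sinh (k*x))^2 + 1) * integral {0..x} g"
    by (simp only: ch)
  hence "(cosh (k*x) * k * sinh_moment k g x + sinh (k*x) * (sinh (k*x) * integral {0..x} g))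
      - (sinh (k*x) * k * cosh_moment k g x + cosh (k*x) * (cosh (k*x) * integral {0..x} g))
      = particular_aux k g x - integral {0..x} g"
    unfolding particular_aux_def by (simp add: algebra_simps power2_eq_square)
  ultimately show "(particular_sol k g has_real_derivative particular_aux k g x - integral {0..x} g)
      (at x within {0..L})" by simp
  have "(particular_aux k g has_real_derivative
      k * ((sinh (k*x) * k * sinh_moment k g x + cosh (k*x) * (sinh (k*x) * integral {0..x} g))
      - (cosh (k*x) * k * cosh_moment k g x + sinh (k*x) * (cosh (k*x) * integral {0..x} g))))
      (at x within {0..L})"
    unfolding particular_aux_def[abs_def] by (auto intro!: derivative_eq_intros dc ds)
  moreover have "k * ((sinh (k*x) * k * sinh_moment k g x + cosh (k*x) * (sinh (k*x) * integral {0..x} g))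
      - (cosh (k*x) * k * cosh_moment k g x + sinh (k*x) * (cosh (k*x) * integral {0..x} g)))
      = k^2 * particular_sol k g x"
    unfolding particular_sol_def by (simp add: algebra_simps power2_eq_square)
  ultimately show "(particular_aux k g has_real_derivative k^2 * particular_sol k g x) (at x within {0..L})"
    by simp
qed

lemma abs_weighted_primitive_integral_le:
  fixes g w :: "real \<Rightarrow> real"
  assumes g: "g absolutely_integrable_on {0..L}" and w: "continuous_on {0..L} w"
    and wc: "\<And>y. y \<in> {0..L} \<Longrightarrow> \<bar>w y\<bar> \<le> c" and x: "x \<in> {0..L}"
  shows "\<bar>integral {0..x} (\<lambda>y. w y * integral {0..y} g)\<bar> \<le> c * integral {0..L} (\<lambda>x. \<bar>g x\<bar>) * L"
proof -
  define m where "m = integral {0..L} (\<lambda>x. \<bar>g x\<bar>)"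
  have gi: "g integrable_on {0..L}" using g by (simp add: absolutely_integrable_on_def)
  have m: "m \<ge> 0" using g unfolding m_def absolutely_integrable_on_def by (intro integral_nonneg) auto
  have c: "c \<ge> 0" using wc[of x] x by linarith
  have "norm (integral {0..x} (\<lambda>y. w y * integral {0..y} g)) \<le> c * m * (x - 0)"
  proof (rule integral_bound)
    show "continuous_on {0..x} (\<lambda>y. w y * integral {0..y} g)"
      using continuous_on_subset[OF w] continuous_on_subset[OF indefinite_integral_continuous_1[OF gi]] x
      by (intro continuous_intros) auto
    show "norm (w t * integral {0..t} g) \<le> c * m" if "t \<in> {0..x}" for t
      using mult_mono[OF wc abs_integral_initial_le[OF g], of t t] that x c by (auto simp: abs_mult m_def)
  qed (use x in auto)
  also have "\<dots> \<le> c * m * L" using x c m by (intro mult_left_mono) auto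
  finally show ?thesis by (simp add: m_def)
qed

lemma particular_sol_bounds:
  fixes g :: "real \<Rightarrow> real" and k :: real
  assumes k: "k > 0" and g: "g absolutely_integrable_on {0..L}"
  defines "m \<equiv> integral {0..L} (\<lambda>x. \<bar>g x\<bar>)"
  shows "\<And>x. x \<in> {0..L} \<Longrightarrow> \<bar>particular_sol k g x\<bar> \<le> 2*L*(cosh (k*L))^2 * m"
    and "L \<ge> 0 \<Longrightarrow> \<bar>particular_aux k g L\<bar> \<le> 2*k*L*(cosh (k*L))^2 * m"
proof -
  define c where "c = cosh (k*L)"
  have c1: "c \<ge> 1" by (simp add: c_def cosh_real_ge_1)
  have cosh_le: "\<bar>cosh (k*y)\<bar> \<le> c" and sinh_le: "\<bar>sinh (k*y)\<bar> \<le> c" if "y \<in> {0..L}" for y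
  proof -
    show "\<bar>cosh (k*y)\<bar> \<le> c" unfolding c_def using that k by (simp add: cosh_real_nonneg_le_iff mult_left_mono)
    thus "\<bar>sinh (k*y)\<bar> \<le> c" using abs_sinh_le_cosh[of "k*y"] by simp
  qed
  have cm: "\<bar>cosh_moment k g x\<bar> \<le> c * m * L" "\<bar>sinh_moment k g x\<bar> \<le> c * m * L" if "x \<in> {0..L}" for x
    unfolding cosh_moment_def sinh_moment_def m_def using cosh_le sinh_le that
    by (auto intro!: abs_weighted_primitive_integral_le[OF g] continuous_intros)
  have comb: "\<bar>a * p - b * q\<bar> \<le> 2*L*c^2 * m" if "\<bar>a\<bar> \<le> c" "\<bar>b\<bar> \<le> c" "\<bar>p\<bar> \<le> c * m * L" "\<bar>q\<bar> \<le> c * m * L"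
    for a b p q :: real
  proof -
    have "\<bar>a * p\<bar> \<le> c * (c * m * L)" "\<bar>b * q\<bar> \<le> c * (c * m * L)"
      unfolding abs_mult using that c1 by (auto intro!: mult_mono)
    thus ?thesis by (simp add: power2_eq_square algebra_simps abs_le_iff)
  qed
  show "\<bar>particular_sol k g x\<bar> \<le> 2*L*(cosh (k*L))^2 * m" if x: "x \<in> {0..L}" for x
    unfolding particular_sol_def c_def[symmetric] by (rule comb) (use sinh_le cosh_le cm x in auto)
  assume "L \<ge> 0"
  hence L: "L \<in> {0..L}" by simp
  have "\<bar>cosh (k*L) * sinh_moment k g L - sinh (k*L) * cosh_moment k g L\<bar> \<le> 2*L*c^2 * m"
    by (rule comb[OF cosh_le[OF L] sinh_le[OF L] cm(2)[OF L] cm(1)[OF L]])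
  thus "\<bar>particular_aux k g L\<bar> \<le> 2*k*L*(cosh (k*L))^2 * m"
    unfolding particular_aux_def c_def using k by (simp add: abs_mult mult_left_mono mult.assoc)
qed

definition resolvent_edge :: "real \<Rightarrow> real \<Rightarrow> (real \<Rightarrow> real) \<Rightarrow> real \<Rightarrow> real \<Rightarrow> real \<Rightarrow> real" where
  "resolvent_edge k L g a b x = particular_sol k g x + sinh_interp k L a (b - particular_sol k g L) x"

definition resolvent_edge_deriv ::
    "real \<Rightarrow> real \<Rightarrow> (real \<Rightarrow> real) \<Rightarrow> real \<Rightarrow> real \<Rightarrow> real \<Rightarrow> real" where
  "resolvent_edge_deriv k L g a b x = particular_aux k g x - integral {0..x} g
     + k * ((b - particular_sol k g L) * cosh (k*x) - a * cosh (k*(L - x))) / sinh (k*L)"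

definition start_defect :: "real \<Rightarrow> real \<Rightarrow> (real \<Rightarrow> real) \<Rightarrow> real" where
  "start_defect k L g = - k * particular_sol k g L / sinh (k*L)"

definition end_defect :: "real \<Rightarrow> real \<Rightarrow> (real \<Rightarrow> real) \<Rightarrow> real" where
  "end_defect k L g =
     particular_aux k g L - integral {0..L} g - k * cosh (k*L) * particular_sol k g L / sinh (k*L)"

lemma edge_W22_if_forced_derivatives:
  fixes \<psi> p R f :: "real \<Rightarrow> real" and k :: real
  assumes fm: "f measurable_on {0..l}" and fs: "(\<lambda>x. (f x)^2) integrable_on {0..l}"
    and d1: "\<And>x. x \<in> {0..l} \<Longrightarrow> (\<psi> has_real_derivative p x) (at x within {0..l})"
    and d2: "\<And>x. x \<in> {0..l} \<Longrightarrow> (R has_real_derivative k^2 * \<psi> x) (at x within {0..l})"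
    and pR: "\<And>x. x \<in> {0..l} \<Longrightarrow> p x = R x - integral {0..x} f"
  shows "edge_W22 l \<psi> p (\<lambda>x. k^2 * \<psi> x - f x)"
  unfolding edge_W22_def
proof (intro conjI ballI)
  have "continuous_on {0..l} \<psi>"
    unfolding continuous_on_eq_continuous_within
    using d1 has_derivative_continuous unfolding has_field_derivative_def by blast
  hence c: "continuous_on {0..l} (\<lambda>x. k^2 * \<psi> x)" by (intro continuous_intros)
  have fa: "f absolutely_integrable_on {0..l}" by (rule square_integrable_imp_absolutely_integrable[OF fm fs])
  show "(\<lambda>x. k^2 * \<psi> x - f x) absolutely_integrable_on {0..l}"
    by (intro set_integral_diff(1) absolutely_integrable_continuous_real c fa)
  have cm: "(\<lambda>x. k^2 * \<psi> x) measurable_on {0..l}"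
    using c by (simp add: measurable_on_iff_borel_measurable continuous_imp_measurable_on_sets_lebesgue)
  have "(\<lambda>x. (k^2 * \<psi> x + - f x)\<^sup>2) integrable_on {0..l}"
    by (rule square_integrable_add)
       (use cm measurable_on_minus[OF fm] fs c in \<open>auto intro: integrable_continuous_real continuous_intros\<close>)
  thus "(\<lambda>x. (k^2 * \<psi> x - f x)\<^sup>2) integrable_on {0..l}" by simp
  fix x assume x: "x \<in> {0..l}"
  have fx: "f integrable_on {0..x}"
    using integrable_on_subinterval[OF set_lebesgue_integral_eq_integral(1)[OF fa]] x by auto
  have "((\<lambda>t. k^2 * \<psi> t) has_integral (R x - R 0)) {0..x}"
    by (rule has_integral_derivative_initial_segment[OF x d2])
  hence "integral {0..x} (\<lambda>t. k^2 * \<psi> t - f t) = (R x - R 0) - integral {0..x} f"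
    using fx by (subst integral_diff) (auto simp del: integral_mult_right simp: integral_unique has_integral_integrable)
  moreover have "p 0 = R 0" using pR[of 0] x by simp
  ultimately show "p x = p 0 + integral {0..x} (\<lambda>x. k^2 * \<psi> x - f x)"
    using pR[OF x] by simp
  show "\<psi> x = \<psi> 0 + integral {0..x} p"
    using has_integral_derivative_initial_segment[OF x d1] by (simp add: integral_unique)
qed

lemma resolvent_edge_solution:
  fixes g :: "real \<Rightarrow> real"
  assumes k: "k > 0" and L: "L > 0"
    and gm: "g measurable_on {0..L}" and gs: "(\<lambda>x. (g x)^2) integrable_on {0..L}"
  shows "edge_W22 L (resolvent_edge k L g a b) (resolvent_edge_deriv k L g a b)
      (\<lambda>x. k^2 * resolvent_edge k L g a b x - g x)"
    and "resolvent_edge k L g a b 0 = a" "resolvent_edge k L g a b L = b"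
    and "resolvent_edge_deriv k L g a b 0 = sinh_flux k L a b + start_defect k L g"
    and "- resolvent_edge_deriv k L g a b L = sinh_flux k L b a - end_defect k L g"
proof -
  have gi: "g integrable_on {0..L}"
    using square_integrable_imp_absolutely_integrable[OF gm gs] by (simp add: absolutely_integrable_on_def)
  define s where "s = sinh (k*L)"
  have s: "s > 0" using k L by (simp add: s_def)
  define Q where "Q = particular_sol k g"
  define R where "R = particular_aux k g"
  define b' where "b' = b - Q L"
  define Rt where "Rt x = R x + k * (b' * cosh (k*x) - a * cosh (k*(L - x))) / s" for x
  have Q0: "Q 0 = 0" and R0: "R 0 = 0"
    by (simp_all add: Q_def R_def particular_sol_def particular_aux_def sinh_moment_def cosh_moment_def)
  show "edge_W22 L (resolvent_edge k L g a b) (resolvent_edge_deriv k L g a b)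
      (\<lambda>x. k^2 * resolvent_edge k L g a b x - g x)"
  proof (rule edge_W22_if_forced_derivatives[OF gm gs, where R=Rt])
    fix x assume x: "x \<in> {0..L}"
    note d = particular_sol_derivatives[OF gi x, of k, folded Q_def R_def]
    show "(resolvent_edge k L g a b has_real_derivative resolvent_edge_deriv k L g a b x) (at x within {0..L})"
      unfolding resolvent_edge_def[abs_def] resolvent_edge_deriv_def sinh_interp_def Q_def[symmetric]
        R_def[symmetric] b'_def[symmetric] s_def[symmetric]
      using s by (auto intro!: derivative_eq_intros d simp: field_simps)
    show "(Rt has_real_derivative k^2 * resolvent_edge k L g a b x) (at x within {0..L})"
      unfolding resolvent_edge_def sinh_interp_def Q_def[symmetric] Rt_def[abs_def] b'_def[symmetric]
        s_def[symmetric] using s by (auto intro!: derivative_eq_intros d simp: field_simps power2_eq_square)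
    show "resolvent_edge_deriv k L g a b x = Rt x - integral {0..x} g"
      by (simp add: resolvent_edge_deriv_def Rt_def Q_def R_def b'_def s_def)
  qed
  show "resolvent_edge k L g a b 0 = a" "resolvent_edge k L g a b L = b"
    using s k L by (simp_all add: resolvent_edge_def sinh_interp_def Q_def[symmetric] Q0 s_def)
  show "resolvent_edge_deriv k L g a b 0 = sinh_flux k L a b + start_defect k L g"
    using s k L R0 by (simp add: resolvent_edge_deriv_def sinh_flux_def start_defect_def R_def field_simps)
  show "- resolvent_edge_deriv k L g a b L = sinh_flux k L b a - end_defect k L g"
    using s k L by (simp add: resolvent_edge_deriv_def sinh_flux_def end_defect_def field_simps)
qed

lemma abs_resolvent_edge_le:
  fixes g :: "real \<Rightarrow> real"
  assumes k: "k > 0" and L: "L > 0" and g: "g absolutely_integrable_on {0..L}" and x: "x \<in> {0..L}"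
  shows "\<bar>resolvent_edge k L g a b x\<bar> \<le> \<bar>a\<bar> + \<bar>b\<bar> + 4*L*(cosh (k*L))^2 * integral {0..L} (\<lambda>x. \<bar>g x\<bar>)"
proof -
  note Q = particular_sol_bounds(1)[OF k g]
  have "\<bar>sinh_interp k L a (b - particular_sol k g L) x\<bar> \<le> \<bar>a\<bar> + \<bar>b - particular_sol k g L\<bar>"
    by (rule abs_sinh_interp_le[OF k L x])
  moreover have "\<bar>particular_sol k g L\<bar> \<le> 2*L*(cosh (k*L))^2 * integral {0..L} (\<lambda>x. \<bar>g x\<bar>)"
    using Q L by simp
  ultimately show ?thesis using Q[OF x] unfolding resolvent_edge_def by linarith
qed

lemma defects_bounded:
  fixes k L :: real
  assumes k: "k > 0" and L: "L > 0"
  obtains K where "\<And>g :: real \<Rightarrow> real. g absolutely_integrable_on {0..L} \<Longrightarrow>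
      \<bar>start_defect k L g\<bar> \<le> K * integral {0..L} (\<lambda>x. \<bar>g x\<bar>) \<and>
      \<bar>end_defect k L g\<bar> \<le> K * integral {0..L} (\<lambda>x. \<bar>g x\<bar>)"
proof -
  define s where "s = sinh (k*L)"
  define c where "c = cosh (k*L)"
  define K0 where "K0 = 2*L*c^2"
  have s: "s > 0" using k L by (simp add: s_def)
  have c: "c \<ge> 1" by (simp add: c_def cosh_real_ge_1)
  have K0: "K0 \<ge> 0" using L by (simp add: K0_def)
  show ?thesis
  proof (rule that[of "K0 * k / s + k * K0 + 1 + K0 * k * c / s"], intro conjI)
    fix g :: "real \<Rightarrow> real" assume g: "g absolutely_integrable_on {0..L}"
    define m where "m = integral {0..L} (\<lambda>x. \<bar>g x\<bar>)"
    have m: "m \<ge> 0" using g unfolding m_def absolutely_integrable_on_def by (intro integral_nonneg) auto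
    have Q: "\<bar>particular_sol k g L\<bar> \<le> K0 * m"
      using particular_sol_bounds(1)[OF k g, of L] L by (simp add: K0_def c_def m_def)
    have R: "\<bar>particular_aux k g L\<bar> \<le> k * K0 * m"
      using particular_sol_bounds(2)[OF k g] L by (simp add: K0_def c_def m_def algebra_simps)
    have G: "\<bar>integral {0..L} g\<bar> \<le> m"
      using abs_integral_initial_le[OF g, of L] L by (simp add: m_def)
    have "\<bar>start_defect k L g\<bar> = \<bar>particular_sol k g L\<bar> * k / s"
      using k s by (simp add: start_defect_def s_def abs_mult)
    also have "\<dots> \<le> K0 * m * k / s" using Q k s by (simp add: divide_right_mono mult_right_mono)
    also have "\<dots> \<le> (K0 * k / s + k * K0 + 1 + K0 * k * c / s) * m"
      using m K0 k s c by (simp add: algebra_simps)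
    finally show "\<bar>start_defect k L g\<bar> \<le> (K0 * k / s + k * K0 + 1 + K0 * k * c / s) * m" .
    have "\<bar>k * c * particular_sol k g L / s\<bar> \<le> K0 * m * k * c / s"
      using Q k s c by (simp add: abs_mult divide_right_mono mult_right_mono mult.assoc mult.left_commute)
    hence "\<bar>end_defect k L g\<bar> \<le> k * K0 * m + m + K0 * m * k * c / s"
      unfolding end_defect_def s_def[symmetric] c_def[symmetric] using R G by linarith
    also have "\<dots> \<le> (K0 * k / s + k * K0 + 1 + K0 * k * c / s) * m"
      using m K0 k s c by (simp add: algebra_simps)
    finally show "\<bar>end_defect k L g\<bar> \<le> (K0 * k / s + k * K0 + 1 + K0 * k * c / s) * m" .
  qed
qed

lemma summable_on_vertex_sum_square:
  fixes a b N :: "edge \<Rightarrow> real"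
  assumes a: "\<And>e. (a e)^2 \<le> N e" and b: "\<And>e. (b e)^2 \<le> N e" and N: "N summable_on UNIV"
  shows "(\<lambda>j. (a (j, True) + a (j, False) + b (j-1, True) + b (j-1, False))^2) summable_on UNIV"
proof (rule summable_on_comparison_test)
  show "(\<lambda>j. 4 * (N (j, True) + N (j, False) + N (j-1, True) + N (j-1, False))) summable_on UNIV"
    using summable_on_edges_side[OF N] summable_on_int_shift[OF summable_on_edges_side[OF N], of "-1"]
    by (intro summable_on_cmult_right summable_on_add) auto
  fix j
  show "(a (j, True) + a (j, False) + b (j-1, True) + b (j-1, False))^2
      \<le> 4 * (N (j, True) + N (j, False) + N (j-1, True) + N (j-1, False))"
    using square_sum4_le[of "a (j, True)" "a (j, False)" "b (j-1, True)" "b (j-1, False)"]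
      a[of "(j, True)"] a[of "(j, False)"] b[of "(j-1, True)"] b[of "(j-1, False)"] by simp
qed simp

lemma straight_defects_square_summable:
  fixes k :: real and f :: gfun
  assumes k: "k > 0" and f: "L2_graph (chain_len 0) f"
  shows "(\<lambda>j. (start_defect k pi (f (j, True)) + start_defect k pi (f (j, False))
      - end_defect k pi (f (j-1, True)) - end_defect k pi (f (j-1, False)))^2) summable_on UNIV"
proof -
  have fm: "f e measurable_on {0..pi}" and fs: "(\<lambda>x. (f e x)^2) integrable_on {0..pi}" for e
    using f unfolding L2_graph_def chain_len_straight by blast+
  define N where "N e = integral {0..pi} (\<lambda>x. (f e x)^2)" for e
  have N: "N summable_on UNIV" using f unfolding L2_graph_def chain_len_straight N_def by auto
  define m where "m e = integral {0..pi} (\<lambda>x. \<bar>f e x\<bar>)" for e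
  have mN: "(m e)^2 \<le> pi * N e" for e
    unfolding m_def N_def by (rule square_integral_abs_le[OF pi_gt_zero fm fs])
  obtain K where K: "\<And>e. \<bar>start_defect k pi (f e)\<bar> \<le> K * m e \<and> \<bar>end_defect k pi (f e)\<bar> \<le> K * m e"
    using defects_bounded[OF k pi_gt_zero] square_integrable_imp_absolutely_integrable[OF fm fs]
    unfolding m_def by metis
  have sq: "x^2 \<le> K^2 * pi * N e" if "\<bar>x\<bar> \<le> K * m e" for x e
    using abs_le_imp_square_le[OF that] mult_left_mono[OF mN[of e], of "K^2"]
    by (simp add: power_mult_distrib algebra_simps)
  have "(\<lambda>e. K^2 * pi * N e) summable_on UNIV" by (intro summable_on_cmult_right N)
  from summable_on_vertex_sum_square[OF _ _ this,
      of "\<lambda>e. start_defect k pi (f e)" "\<lambda>e. - end_defect k pi (f e)"]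
  show ?thesis using K sq by simp
qed

text \<open>On every edge the solution is a particular solution plus a \<open>sinh\<close> interpolation of unknown
vertex values \<open>u\<close>; the \<open>\<delta>\<close>-conditions then become the difference equation for \<open>u\<close>, with an
\<open>\<ell>\<^sup>2\<close> right-hand side made of the boundary defects of the particular solutions.\<close>

lemma straight_resolvent_surjective:
  fixes \<alpha> k :: real and f :: gfun
  assumes k: "k > 0" and D: "chain_discriminant \<alpha> k > 1" and f: "L2_graph (chain_len 0) f"
  shows "\<exists>\<psi>. H_rel (chain_len 0) \<alpha> \<psi> (\<lambda>e x. f e x + (- (k^2)) * \<psi> e x)"
proof -
  define l where "l = chain_len 0"
  have lpi: "l e = pi" for e by (simp add: l_def chain_len_straight)
  have fm: "f e measurable_on {0..pi}" and fs: "(\<lambda>x. (f e x)^2) integrable_on {0..pi}" for e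
    using f unfolding L2_graph_def chain_len_straight by blast+
  define s where "s = sinh (k*pi)"
  have s: "s > 0" using k by (simp add: s_def)
  define d where "d j = start_defect k pi (f (j, True)) + start_defect k pi (f (j, False))
      - end_defect k pi (f (j-1, True)) - end_defect k pi (f (j-1, False))" for j
  from summable_on_cmult_right[OF straight_defects_square_summable[OF k f], of "(s / (2*k))^2"]
  have "(\<lambda>j. (- (s / (2*k)) * d j)^2) summable_on UNIV"
    unfolding d_def by (simp only: power_mult_distrib power2_minus)
  from l2_solve_difference_equation[OF D this]
  obtain u where u: "\<And>j. u (j+1) + u (j-1) - 2 * chain_discriminant \<alpha> k * u j = - (s / (2*k)) * d j"
    and u2: "(\<lambda>j. (u j)^2) summable_on UNIV" by blast
  define \<psi> where "\<psi> e = resolvent_edge k pi (f e) (u (fst e)) (u (fst e + 1))" for e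
  define p where "p e = resolvent_edge_deriv k pi (f e) (u (fst e)) (u (fst e + 1))" for e
  have edge: "edge_W22 pi (\<psi> e) (p e) (\<lambda>x. k^2 * \<psi> e x - f e x)"
    "\<psi> e 0 = u (fst e)" "\<psi> e pi = u (fst e + 1)"
    "p e 0 = sinh_flux k pi (u (fst e)) (u (fst e + 1)) + start_defect k pi (f e)"
    "- p e pi = sinh_flux k pi (u (fst e + 1)) (u (fst e)) - end_defect k pi (f e)" for e
    unfolding \<psi>_def p_def by (rule resolvent_edge_solution[OF k pi_gt_zero fm fs])+
  have "L2_graph l \<psi>"
  proof (rule L2_graph_if_pointwise_bound)
    show "continuous_on {0..l e} (\<psi> e)" for e using edge_W22_continuous(2)[OF edge(1)] by (simp add: lpi)
    show "0 \<le> l e \<and> l e \<le> pi" for e by (simp add: lpi)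
    define C where "C = 4*pi*(cosh (k*pi))^2"
    fix e x assume "x \<in> {0..l e}"
    hence "(\<psi> e x)^2 \<le> (\<bar>u (fst e)\<bar> + \<bar>u (fst e + 1)\<bar> + C * integral {0..pi} (\<lambda>x. \<bar>f e x\<bar>))^2"
      unfolding \<psi>_def C_def using square_integrable_imp_absolutely_integrable[OF fm fs]
      by (intro abs_le_imp_square_le abs_resolvent_edge_le[OF k pi_gt_zero]) (auto simp: lpi)
    also have "\<dots> \<le> 3 * ((u (fst e))^2 + (u (fst e + 1))^2 + C^2 * (pi * integral {0..pi} (\<lambda>x. (f e x)^2)))"
      using square_sum3_le[of "\<bar>u (fst e)\<bar>" "\<bar>u (fst e + 1)\<bar>" "C * integral {0..pi} (\<lambda>x. \<bar>f e x\<bar>)"]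
        mult_left_mono[OF square_integral_abs_le[OF pi_gt_zero fm fs], of "C^2" e]
      by (simp add: power_mult_distrib)
    finally show "(\<psi> e x)^2 \<le> 3 * ((u (fst e))^2 + (u (fst e + 1))^2 + C^2 * (pi * integral {0..pi} (\<lambda>x. (f e x)^2)))" .
  next
    show "(\<lambda>e::edge. 3 * ((u (fst e))^2 + (u (fst e + 1))^2
        + (4*pi*(cosh (k*pi))^2)^2 * (pi * integral {0..pi} (\<lambda>x. (f e x)^2)))) summable_on UNIV"
      using summable_on_edges_fst[OF u2] summable_on_edges_fst[OF summable_on_int_shift[OF u2, of 1]] f
      unfolding L2_graph_def chain_len_straight by (intro summable_on_cmult_right summable_on_add) auto
  qed
  hence L2: "L2_graph l (\<lambda>e x. f e x + (- (k^2)) * \<psi> e x)"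
    using L2_graph_add[OF f[folded l_def] L2_graph_cmult] by blast
  have "delta_cond l \<alpha> \<psi> p"
    unfolding delta_cond_def lpi
  proof (intro allI conjI)
    fix j :: int
    show "\<psi> (j - 1, True) pi = \<psi> (j, True) 0" "\<psi> (j - 1, False) pi = \<psi> (j, True) 0"
      "\<psi> (j, False) 0 = \<psi> (j, True) 0" by (simp_all add: edge(2,3))
    have "p (j, True) 0 + p (j, False) 0 - p (j - 1, True) pi - p (j - 1, False) pi = vertex_flux l k u j + d j"
      using edge(4)[of "(j, True)"] edge(4)[of "(j, False)"] edge(5)[of "(j-1, True)"] edge(5)[of "(j-1, False)"]
      by (simp add: vertex_flux_def d_def lpi)
    also have "vertex_flux l k u j - \<alpha> * u j = 2*k / s * (- (s / (2*k)) * d j)"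
      using vertex_flux_regular[where l=l and u=u and j=j and \<alpha>=\<alpha>, OF k lpi lpi lpi lpi] u[of j]
      by (simp add: s_def)
    hence "vertex_flux l k u j + d j = \<alpha> * u j" using k s by simp
    finally show "p (j, True) 0 + p (j, False) 0 - p (j - 1, True) pi - p (j - 1, False) pi
        = \<alpha> * \<psi> (j, True) 0" by (simp add: edge(2))
  qed
  with edge(1) L2 \<open>L2_graph l \<psi>\<close> have "H_rel l \<alpha> \<psi> (\<lambda>e x. f e x + (- (k^2)) * \<psi> e x)"
    unfolding H_rel_def ae_eq_graph_def
    by (intro conjI exI[of _ p] exI[of _ "\<lambda>e x. k^2 * \<psi> e x - f e x"]) (auto simp: lpi)
  thus ?thesis unfolding l_def by blast
qed

lemma straight_chain_resolvent:
  fixes \<alpha> k :: real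
  assumes k: "k > 0" and D: "chain_discriminant \<alpha> k > 1"
  shows "- (k^2) \<in> chain_resolvent (chain_len 0) \<alpha>"
  unfolding chain_resolvent_def
  using straight_resolvent_surjective[OF k D] straight_eigenfunction_eq_0[OF k D] by blast

section \<open>A negative eigenvalue of \<open>H\<^sup>+\<close> for \<open>\<alpha> < 0\<close>\<close>

definition decay_factor :: "real \<Rightarrow> real \<Rightarrow> real" where
  "decay_factor \<alpha> k = chain_discriminant \<alpha> k - sqrt ((chain_discriminant \<alpha> k)^2 - 1)"

text \<open>The defect in the \<open>\<delta>\<close>-condition at \<open>v\<^sub>1\<close> of the even ansatz with \<open>u\<^sub>0 = u\<^sub>1 = 1\<close> decaying
like \<open>decay_factor \<alpha> k\<^sup>j\<close> along the chain; each arc of ring \<open>0\<close>, with equal end values, contributes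
\<open>-k tanh (k \<ell>/2)\<close>.\<close>

definition ring0_mismatch :: "real \<Rightarrow> real \<Rightarrow> real \<Rightarrow> real" where
  "ring0_mismatch \<alpha> \<theta> k = 2*k*(decay_factor \<alpha> k - cosh (k*pi)) / sinh (k*pi)
     - k * tanh (k*(pi+\<theta>)/2) - k * tanh (k*(pi-\<theta>)/2) - \<alpha>"

lemma chain_discriminant_minus_1:
  assumes "k > 0"
  shows "chain_discriminant \<alpha> k - 1 = sinh (k*pi) / (4*k) * (4*k*tanh (k*pi/2) + \<alpha>)"
proof -
  have "cosh (k*pi) - 1 = sinh (k*pi) * tanh (k*pi/2)"
    using cosh_minus_1_div_sinh[of "k*pi"] assms by (simp add: field_simps)
  thus ?thesis unfolding chain_discriminant_def using assms by (simp add: field_simps)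
qed

lemma band_edge_exists:
  fixes \<alpha> \<kappa>\<^sub>0 :: real
  assumes \<alpha>: "\<alpha> < 0" and \<kappa>: "\<kappa>\<^sub>0 > 0" and \<kappa>\<alpha>: "\<kappa>\<^sub>0 * tanh (\<kappa>\<^sub>0 * pi) = - \<alpha> / 2"
  obtains k\<^sub>b where "0 < k\<^sub>b" "k\<^sub>b < \<kappa>\<^sub>0" "4 * k\<^sub>b * tanh (k\<^sub>b * pi / 2) = - \<alpha>"
proof -
  define h where "h k = 4*k*tanh (k*pi/2)" for k :: real
  have "tanh (\<kappa>\<^sub>0*pi) < 2 * tanh (\<kappa>\<^sub>0*pi/2)"
  proof -
    define t where "t = tanh (\<kappa>\<^sub>0*pi/2)"
    have t: "t > 0" using \<kappa> by (simp add: t_def)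
    have "tanh (\<kappa>\<^sub>0*pi) = tanh (\<kappa>\<^sub>0*pi/2 + \<kappa>\<^sub>0*pi/2)" by simp
    also have "\<dots> = 2*t / (1 + t^2)" unfolding t_def by (subst tanh_add) (simp_all add: power2_eq_square)
    also have "\<dots> < 2*t" using t by (simp add: field_simps add_pos_pos)
    finally show ?thesis by (simp add: t_def)
  qed
  hence "2*\<kappa>\<^sub>0*tanh (\<kappa>\<^sub>0*pi) < 4*\<kappa>\<^sub>0*tanh (\<kappa>\<^sub>0*pi/2)" using \<kappa> by simp
  hence h\<kappa>: "- \<alpha> < h \<kappa>\<^sub>0" using \<kappa>\<alpha> by (simp add: h_def)
  have "continuous_on {0..\<kappa>\<^sub>0} h" unfolding h_def by (intro continuous_intros) auto
  then obtain k\<^sub>b where kb: "0 \<le> k\<^sub>b" "k\<^sub>b \<le> \<kappa>\<^sub>0" "h k\<^sub>b = - \<alpha>"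
    using IVT'[of h 0 "-\<alpha>" \<kappa>\<^sub>0] h\<kappa> \<alpha> \<kappa> by (force simp: h_def)
  show ?thesis
  proof (rule that)
    show "0 < k\<^sub>b" using kb \<alpha> by (cases "k\<^sub>b = 0") (auto simp: h_def)
    show "k\<^sub>b < \<kappa>\<^sub>0" using kb h\<kappa> by (cases "k\<^sub>b = \<kappa>\<^sub>0") auto
    show "4 * k\<^sub>b * tanh (k\<^sub>b * pi / 2) = - \<alpha>" using kb by (simp add: h_def)
  qed
qed

lemma chain_discriminant_gt_1_above_band_edge:
  assumes kb: "0 < k\<^sub>b" "4 * k\<^sub>b * tanh (k\<^sub>b * pi / 2) = - \<alpha>" and k: "k\<^sub>b < k"
  shows "chain_discriminant \<alpha> k > 1"
proof -
  have "tanh (k\<^sub>b*pi/2) < tanh (k*pi/2)" using k by (simp add: divide_strict_right_mono)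
  moreover have "0 < tanh (k\<^sub>b*pi/2)" using kb by simp
  ultimately have "k\<^sub>b * tanh (k\<^sub>b*pi/2) < k * tanh (k*pi/2)" using kb k by (intro mult_strict_mono) auto
  hence "4*k*tanh (k*pi/2) + \<alpha> > 0" using kb by simp
  moreover have "sinh (k*pi) / (4*k) > 0" using kb k by simp
  ultimately have "sinh (k*pi) / (4*k) * (4*k*tanh (k*pi/2) + \<alpha>) > 0" by (rule mult_pos_pos[rotated])
  thus ?thesis using chain_discriminant_minus_1[of k \<alpha>] kb k by simp
qed

text \<open>At the band edge \<open>decay_factor = 1\<close> and the mismatch is positive by concavity of \<open>tanh\<close>;
at \<open>\<kappa>\<^sub>0\<close> the decay factor is \<open>1 / cosh (\<kappa>\<^sub>0 \<pi>)\<close>, the straight-chain terms cancel \<open>\<alpha>\<close> and only the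
negative ring-\<open>0\<close> terms remain.\<close>

lemma ring0_mismatch_band_edge_pos:
  assumes \<theta>: "0 < \<theta>" "\<theta> < pi" and kb: "0 < k\<^sub>b" "4 * k\<^sub>b * tanh (k\<^sub>b * pi / 2) = - \<alpha>"
  shows "ring0_mismatch \<alpha> \<theta> k\<^sub>b > 0"
proof -
  have "chain_discriminant \<alpha> k\<^sub>b = 1" using chain_discriminant_minus_1[OF kb(1), of \<alpha>] kb by simp
  hence "decay_factor \<alpha> k\<^sub>b = 1" by (simp add: decay_factor_def)
  hence "2*k\<^sub>b*(decay_factor \<alpha> k\<^sub>b - cosh (k\<^sub>b*pi)) / sinh (k\<^sub>b*pi) = - 2*k\<^sub>b * tanh (k\<^sub>b*pi/2)"
    using cosh_minus_1_div_sinh[of "k\<^sub>b*pi"] kb by (simp add: field_simps)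
  hence "ring0_mismatch \<alpha> \<theta> k\<^sub>b
      = k\<^sub>b * (2 * tanh (k\<^sub>b*pi/2) - (tanh (k\<^sub>b*pi/2 + k\<^sub>b*\<theta>/2) + tanh (k\<^sub>b*pi/2 - k\<^sub>b*\<theta>/2)))"
    unfolding ring0_mismatch_def using kb(2) by (simp add: algebra_simps add_divide_distrib diff_divide_distrib)
  moreover have "tanh (k\<^sub>b*pi/2 + k\<^sub>b*\<theta>/2) + tanh (k\<^sub>b*pi/2 - k\<^sub>b*\<theta>/2) < 2 * tanh (k\<^sub>b*pi/2)"
    by (rule tanh_add_plus_tanh_diff_less) (use kb \<theta> in \<open>simp_all add: divide_strict_right_mono\<close>)
  ultimately show ?thesis using kb by simp
qed

lemma ring0_mismatch_kappa0_neg: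
  assumes \<theta>: "0 < \<theta>" "\<theta> < pi" and \<kappa>: "\<kappa>\<^sub>0 > 0" and \<kappa>\<alpha>: "\<kappa>\<^sub>0 * tanh (\<kappa>\<^sub>0 * pi) = - \<alpha> / 2"
  shows "ring0_mismatch \<alpha> \<theta> \<kappa>\<^sub>0 < 0"
proof -
  define c where "c = cosh (\<kappa>\<^sub>0*pi)"
  define s where "s = sinh (\<kappa>\<^sub>0*pi)"
  have c: "c > 1" using cosh_gt_1[of "\<kappa>\<^sub>0*pi"] \<kappa> by (simp add: c_def)
  have s: "s > 0" using \<kappa> by (simp add: s_def)
  have cs: "c^2 = s^2 + 1" unfolding c_def s_def by (rule cosh_square_eq)
  have \<alpha>: "\<alpha> = - 2*\<kappa>\<^sub>0 * s / c" using \<kappa>\<alpha> by (simp add: tanh_def c_def s_def field_simps)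
  have D: "chain_discriminant \<alpha> \<kappa>\<^sub>0 = (c^2 + 1) / (2*c)"
    unfolding chain_discriminant_def c_def[symmetric] s_def[symmetric] \<alpha> using \<kappa> c cs
    by (simp add: field_simps power2_eq_square)
  have "(c^2 - 1) / (2*c) > 0" using c by (simp add: power_less_one_iff)
  moreover have "(chain_discriminant \<alpha> \<kappa>\<^sub>0)^2 - 1 = ((c^2 - 1) / (2*c))^2"
    unfolding D using c by (simp add: field_simps power2_eq_square)
  hence "sqrt ((chain_discriminant \<alpha> \<kappa>\<^sub>0)^2 - 1) = \<bar>(c^2 - 1) / (2*c)\<bar>" by (simp only: real_sqrt_abs)
  ultimately have sq: "sqrt ((chain_discriminant \<alpha> \<kappa>\<^sub>0)^2 - 1) = (c^2 - 1) / (2*c)"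
    by (simp only: abs_of_pos)
  have q: "decay_factor \<alpha> \<kappa>\<^sub>0 = 1 / c"
    unfolding decay_factor_def sq unfolding D using c by (simp add: field_simps power2_eq_square)
  have "2*\<kappa>\<^sub>0*(decay_factor \<alpha> \<kappa>\<^sub>0 - cosh (\<kappa>\<^sub>0*pi)) / sinh (\<kappa>\<^sub>0*pi) = \<alpha>"
    unfolding q unfolding c_def[symmetric] s_def[symmetric] \<alpha> using c s cs
    by (simp add: field_simps power2_eq_square)
  moreover have "\<kappa>\<^sub>0 * tanh (\<kappa>\<^sub>0*(pi+\<theta>)/2) > 0" "\<kappa>\<^sub>0 * tanh (\<kappa>\<^sub>0*(pi-\<theta>)/2) > 0"
    using \<kappa> \<theta> by (simp_all add: add_pos_pos)
  ultimately show ?thesis unfolding ring0_mismatch_def by linarith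
qed

lemma ring0_mismatch_root:
  fixes \<alpha> \<theta> \<kappa>\<^sub>0 :: real
  assumes \<alpha>: "\<alpha> < 0" and \<theta>: "0 < \<theta>" "\<theta> < pi" and \<kappa>: "\<kappa>\<^sub>0 > 0"
    and \<kappa>\<alpha>: "\<kappa>\<^sub>0 * tanh (\<kappa>\<^sub>0 * pi) = - \<alpha> / 2"
  obtains k\<^sub>b k where "0 < k\<^sub>b" "k\<^sub>b < k" "k < \<kappa>\<^sub>0" "4 * k\<^sub>b * tanh (k\<^sub>b * pi / 2) = - \<alpha>"
    "ring0_mismatch \<alpha> \<theta> k = 0"
proof -
  obtain k\<^sub>b where kb: "0 < k\<^sub>b" "k\<^sub>b < \<kappa>\<^sub>0" "4 * k\<^sub>b * tanh (k\<^sub>b * pi / 2) = - \<alpha>"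
    using band_edge_exists[OF \<alpha> \<kappa> \<kappa>\<alpha>] by blast
  note pos = ring0_mismatch_band_edge_pos[OF \<theta> kb(1,3)] and neg = ring0_mismatch_kappa0_neg[OF \<theta> \<kappa> \<kappa>\<alpha>]
  have "continuous_on {k\<^sub>b..\<kappa>\<^sub>0} (ring0_mismatch \<alpha> \<theta>)"
  proof -
    have "\<forall>k\<in>{k\<^sub>b..\<kappa>\<^sub>0}. k > 0" using kb by auto
    thus ?thesis unfolding ring0_mismatch_def decay_factor_def chain_discriminant_def
      by (intro continuous_intros) auto
  qed
  then obtain k where k: "k\<^sub>b \<le> k" "k \<le> \<kappa>\<^sub>0" "ring0_mismatch \<alpha> \<theta> k = 0"
    using IVT2'[of "ring0_mismatch \<alpha> \<theta>" \<kappa>\<^sub>0 0 k\<^sub>b] pos neg kb by force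
  moreover have "k \<noteq> k\<^sub>b" "k \<noteq> \<kappa>\<^sub>0" using k pos neg by auto
  ultimately show ?thesis using that kb by force
qed

definition mirrored_geometric :: "real \<Rightarrow> int \<Rightarrow> real" where
  "mirrored_geometric q j = q ^ nat (if j \<ge> 1 then j - 1 else - j)"

lemma mirrored_geometric_reflect: "mirrored_geometric q (1 - j) = mirrored_geometric q j"
  by (simp add: mirrored_geometric_def)

lemma mirrored_geometric_recurrence:
  assumes q: "q^2 + 1 = 2 * D * q" and j: "j \<ge> 2 \<or> j \<le> -1"
  shows "mirrored_geometric q (j+1) + mirrored_geometric q (j-1) = 2 * D * mirrored_geometric q j"
proof -
  have gen: "q^(n+2) + q^n = 2 * D * q^(n+1)" for n
  proof -
    have "q^(n+2) + q^n = q^n * (q^2 + 1)" by (simp add: power_add algebra_simps power2_eq_square)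
    thus ?thesis unfolding q by (simp add: algebra_simps)
  qed
  from j show ?thesis
  proof
    assume "j \<ge> 2"
    hence "j = int (nat (j - 2)) + 2" by simp
    then obtain n where "j = int n + 2" by blast
    thus ?thesis using gen[of n] by (simp add: mirrored_geometric_def nat_add_distrib add.commute)
  next
    assume "j \<le> -1"
    hence "j = - int (nat (- j - 1)) - 1" by simp
    then obtain n where "j = - int n - 1" by blast
    thus ?thesis using gen[of n] by (simp add: mirrored_geometric_def nat_add_distrib add.commute)
  qed
qed

lemma summable_on_mirrored_geometric:
  fixes r :: real
  assumes r0: "0 \<le> r" and r1: "r < 1"
  shows "mirrored_geometric r summable_on UNIV"
proof -
  define f where "f = mirrored_geometric r"
  have g: "(\<lambda>n::nat. r ^ n) summable_on UNIV"
    using summable_on_UNIV_nonneg_real_iff[of "\<lambda>n. r^n"] r0 r1 summable_geometric[of r] by simp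
  have A: "f summable_on range (\<lambda>n. int n + 1)"
    by (subst summable_on_reindex) (auto simp: inj_on_def o_def f_def mirrored_geometric_def g)
  have B: "f summable_on range (\<lambda>n. - int n)"
    by (subst summable_on_reindex) (auto simp: inj_on_def o_def f_def mirrored_geometric_def g)
  have "f summable_on (range (\<lambda>n. int n + 1) \<union> range (\<lambda>n. - int n))"
    by (rule summable_on_Un_disjoint[OF A B]) auto
  moreover have "range (\<lambda>n. int n + 1) \<union> range (\<lambda>n. - int n) = (UNIV :: int set)"
  proof -
    have "j \<in> range (\<lambda>n. int n + 1) \<union> range (\<lambda>n. - int n)" for j :: int
    proof (cases "j \<ge> 1")
      case True thus ?thesis by (auto intro!: image_eqI[of _ _ "nat (j - 1)"])
    next
      case False thus ?thesis by (auto intro!: image_eqI[of _ _ "nat (- j)"])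
    qed
    thus ?thesis by auto
  qed
  ultimately show ?thesis by (simp add: f_def)
qed

lemma even_fn_sinh_extension:
  assumes sym: "\<And>j. u (1 - j) = u j"
  shows "even_fn (chain_len \<theta>) (sinh_extension (chain_len \<theta>) k u)"
  unfolding even_fn_def
proof (intro allI impI)
  fix j b x
  have "u (- j) = u (j+1)" "u (- j + 1) = u j" using sym[of "j+1"] sym[of j] by simp_all
  thus "sinh_extension (chain_len \<theta>) k u (- j, b) (chain_len \<theta> (j, b) - x) = sinh_extension (chain_len \<theta>) k u (j, b) x"
    by (simp add: sinh_extension_def sinh_interp_def chain_len_reflect algebra_simps)
qed

lemma vertex_flux_mirrored_geometric:
  fixes \<alpha> \<theta> k :: real
  assumes \<theta>: "0 < \<theta>" "\<theta> < pi" and k: "k > 0" and D: "chain_discriminant \<alpha> k > 1"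
    and root: "ring0_mismatch \<alpha> \<theta> k = 0"
  defines "u \<equiv> mirrored_geometric (decay_factor \<alpha> k)"
  shows "vertex_flux (chain_len \<theta>) k u j = \<alpha> * u j"
proof -
  define q where "q = decay_factor \<alpha> k"
  note q = characteristic_root[OF D, folded decay_factor_def, folded q_def]
  define l where "l = chain_len \<theta>"
  have lpi: "l (j, b) = pi" if "j \<noteq> 0" for j b using that by (simp add: l_def chain_len_nonzero_ring)
  consider "j \<ge> 2 \<or> j \<le> -1" | "j = 0 \<or> j = 1" by linarith
  thus ?thesis
  proof cases
    case 1
    hence "j \<noteq> 0" "j - 1 \<noteq> 0" by auto
    thus ?thesis using vertex_flux_regular_iff[OF k] mirrored_geometric_recurrence[OF q(3) 1]
      by (simp add: chain_len_nonzero_ring u_def q_def)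
  next
    case 2
    have uv: "u 0 = 1" "u 1 = 1" "u 2 = q" "u (-1) = q" by (simp_all add: u_def q_def mirrored_geometric_def)
    have l0: "l (0, True) = pi + \<theta>" "l (0, False) = pi - \<theta>" by (simp_all add: l_def chain_len_def)
    have "vertex_flux l k u j = 2 * sinh_flux k pi 1 q + sinh_flux k (pi+\<theta>) 1 1 + sinh_flux k (pi-\<theta>) 1 1"
      using 2 by (elim disjE) (simp_all add: vertex_flux_def lpi uv l0)
    also have "\<dots> = \<alpha>"
      using root sinh_flux_same_values[OF k, of "pi+\<theta>" 1] sinh_flux_same_values[OF k, of "pi-\<theta>" 1] \<theta>
      by (simp add: ring0_mismatch_def sinh_flux_def q_def algebra_simps)
    finally show ?thesis using 2 uv by (auto simp: l_def)
  qed
qed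

lemma decaying_even_eigenvalue:
  fixes \<alpha> \<theta> k :: real
  assumes \<theta>: "0 < \<theta>" "\<theta> < pi" and k: "k > 0" and D: "chain_discriminant \<alpha> k > 1"
    and root: "ring0_mismatch \<alpha> \<theta> k = 0"
  shows "even_eigenvalue \<theta> \<alpha> (- (k^2))"
proof -
  define q where "q = decay_factor \<alpha> k"
  note q = characteristic_root[OF D, folded decay_factor_def, folded q_def]
  define u where "u = mirrored_geometric q"
  define l where "l = chain_len \<theta>"
  have lpos: "l e > 0" for e unfolding l_def by (rule chain_len_pos) (use \<theta> in auto)
  have "(\<lambda>j. (u j)^2) = mirrored_geometric (q^2)"
    by (simp add: fun_eq_iff u_def mirrored_geometric_def power_mult[symmetric] mult.commute)
  moreover have "mirrored_geometric (q^2) summable_on UNIV"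
    using q(1,2) by (intro summable_on_mirrored_geometric) (simp_all add: abs_square_less_1)
  ultimately have "(\<lambda>j. (u j)^2) summable_on UNIV" by simp
  hence L2: "L2_graph l (sinh_extension l k u)"
    using lpos chain_len_le[of \<theta>] \<theta> by (intro L2_graph_sinh_extension[OF k, of _ "2*pi"]) (auto simp: l_def)
  have flux: "vertex_flux l k u j = \<alpha> * u j" for j
    unfolding l_def u_def q_def by (rule vertex_flux_mirrored_geometric[OF \<theta> k D root])
  have "\<not> ae_eq_graph l (sinh_extension l k u) (\<lambda>e x. 0)"
  proof
    assume "ae_eq_graph l (sinh_extension l k u) (\<lambda>e x. 0)"
    hence "negligible {x \<in> {0..l (0, True)}. sinh_extension l k u (0, True) x \<noteq> 0}"
      unfolding ae_eq_graph_def by blast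
    moreover have "sinh_extension l k u (0, True) x > 0" if "x \<in> {0..l (0, True)}" for x
    proof -
      have "sinh (k*(l (0, True) - x)) + sinh (k*x) > 0"
        using that k lpos[of "(0, True)"] by (cases "x = 0") (auto intro: add_nonneg_pos)
      thus ?thesis using k lpos[of "(0, True)"]
        by (simp add: sinh_extension_def sinh_interp_def u_def mirrored_geometric_def)
    qed
    hence "{x \<in> {0..l (0, True)}. sinh_extension l k u (0, True) x \<noteq> 0} = {0..l (0, True)}" by force
    ultimately have "negligible {0..l (0, True)}" by simp
    thus False using lpos[of "(0, True)"] negligible_interval(1)[of 0 "l (0, True)"] by simp
  qed
  thus ?thesis
    unfolding even_eigenvalue_def l_def[symmetric]
    using H_rel_sinh_extension[OF k lpos flux L2]
      even_fn_sinh_extension[of u, OF mirrored_geometric_reflect[of q, folded u_def]]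
    by (auto simp: l_def u_def)
qed

lemma straight_chain_spectrum_above:
  fixes \<alpha> k :: real
  assumes k: "k > 0" and D: "\<And>k'. k' \<ge> k \<Longrightarrow> chain_discriminant \<alpha> k' > 1"
    and \<mu>: "\<mu> \<in> chain_spectrum (chain_len 0) \<alpha>"
  shows "- (k^2) < \<mu>"
proof (rule ccontr)
  assume "\<not> - (k^2) < \<mu>"
  define k' where "k' = sqrt (- \<mu>)"
  have "k \<le> k'" using \<open>\<not> - (k^2) < \<mu>\<close> k unfolding k'_def by (simp add: real_le_rsqrt)
  moreover have "0 < k^2" using k by simp
  hence "0 \<le> - \<mu>" using \<open>\<not> - (k^2) < \<mu>\<close> by linarith
  hence "\<mu> = - (k'^2)" unfolding k'_def by simp
  ultimately have "\<mu> \<in> chain_resolvent (chain_len 0) \<alpha>"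
    using straight_chain_resolvent[of k' \<alpha>] D k by simp
  thus False using \<mu> by (simp add: chain_spectrum_def)
qed

theorem corollary3p4:
  fixes \<alpha> \<theta> :: real
  assumes "0 < \<theta>" and "\<theta> < pi"
  shows "(\<alpha> \<ge> 0 \<longrightarrow> (\<forall>E. even_eigenvalue \<theta> \<alpha> E \<longrightarrow> E \<ge> 0)) \<and>
         (\<alpha> < 0 \<longrightarrow> (\<forall>\<kappa>\<^sub>0 > 0. \<kappa>\<^sub>0 * tanh (\<kappa>\<^sub>0 * pi) = - \<alpha> / 2 \<longrightarrow>
            (\<exists>E. even_eigenvalue \<theta> \<alpha> E \<and> E < 0 \<and> - (\<kappa>\<^sub>0 ^ 2) < E \<and>
                 (\<forall>\<mu> \<in> chain_spectrum (chain_len 0) \<alpha>. E < \<mu>))))"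
proof (intro conjI impI allI)
  show "E \<ge> 0" if "\<alpha> \<ge> 0" "even_eigenvalue \<theta> \<alpha> E" for E
    using even_eigenvalue_nonneg[OF assms that] .
next
  fix \<kappa>\<^sub>0 :: real
  assume \<alpha>: "\<alpha> < 0" and \<kappa>: "\<kappa>\<^sub>0 > 0" and \<kappa>\<alpha>: "\<kappa>\<^sub>0 * tanh (\<kappa>\<^sub>0 * pi) = - \<alpha> / 2"
  obtain k\<^sub>b k where kb: "0 < k\<^sub>b" "k\<^sub>b < k" "4 * k\<^sub>b * tanh (k\<^sub>b * pi / 2) = - \<alpha>"
    and k: "k < \<kappa>\<^sub>0" and root: "ring0_mismatch \<alpha> \<theta> k = 0"
    using ring0_mismatch_root[OF \<alpha> assms \<kappa> \<kappa>\<alpha>] by blast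
  have D: "chain_discriminant \<alpha> k' > 1" if "k' \<ge> k" for k'
    using chain_discriminant_gt_1_above_band_edge[OF kb(1,3)] kb(2) that by simp
  have "k > 0" using kb by simp
  show "\<exists>E. even_eigenvalue \<theta> \<alpha> E \<and> E < 0 \<and> - (\<kappa>\<^sub>0 ^ 2) < E \<and>
      (\<forall>\<mu> \<in> chain_spectrum (chain_len 0) \<alpha>. E < \<mu>)"
  proof (intro exI conjI ballI)
    show "even_eigenvalue \<theta> \<alpha> (- (k^2))" using decaying_even_eigenvalue[OF assms \<open>k > 0\<close> D root] by simp
    show "- (k^2) < 0" "- (\<kappa>\<^sub>0^2) < - (k^2)" using \<open>k > 0\<close> k by (simp_all add: power_strict_mono)
    show "- (k^2) < \<mu>" if "\<mu> \<in> chain_spectrum (chain_len 0) \<alpha>" for \<mu>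
      using straight_chain_spectrum_above[OF \<open>k > 0\<close> D that] .
  qed
qed

end
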